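(* Under (A1) and (A2): let $x\in\mathbb R$ and let $(x_n)$ be integers such that $x_n-n^{1/2}x$ stays bounded. Then \[ \lim_{n\to\infty}n^{-1/2}G_n(x_n,0)=\frac1{2\beta\sigma_a^2}\int_0^{2\sigma_a^2}\frac1{\sqrt{2\pi v}}\exp\Bigl\{-\frac{x^2}{2v}\Bigr\}dv. \]
   Context: Environment setup: Fix an integer $M\ge1$. $\mathcal P$ = probability vectors $u=(u(y):-M\le y\le M)$, with $u(y)=0$ for $|y|>M$. Environment $\omega=(\omega_{x,\tau})\in\Omega=\mathcal P^{\mathbb Z^2}$, $u^\omega_\tau(x,y)=\omega_{x,\tau}(y)$; under $\mathbb P$ (expectation $\mathbb E$) the $\omega_{x,\tau}$ are i.i.d. $p(0,j)=\mathbb Eu_0(0,j)$. (A1) no integer $h>1$ and $x$ with $\sum_kp(0,x+kh)=1$; (A2) $\mathbb P\{\max_ju_0(0,j)<1\}>0$. Constants: $V=\sum_jjp(0,j)$; $\sigma_a^2=\sum_x(x-V)^2p(0,x)$; $\lambda(t)=\mathbb E|\sum_xu^\omega_0(0,x)e^{itx}|^2$, $\bar\lambda(t)=|\sum_xp(0,x)e^{itx}|^2$, $\beta=\frac1{2\pi}\int_{-\pi}^\pi\frac{1-\lambda(t)}{1-\bar\lambda(t)}dt$. Difference walk: let $q(0,y)=\sum_{z}\mathbb E[u_0(0,z)u_0(0,z+y)]$ and, for $x\ne0$, $q(x,y)=\sum_zp(0,z)p(0,z+y-x)$ ($x,y\in\mathbb Z$); this is the annealed transition kernel of $Y_n=X_n-\tilde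 X_n$, the difference of two walks moving independently in a common environment. $q^k$ denotes the $k$-step kernel ($q^0(x,y)=\mathbf 1_{\{x=y\}}$) and $G_n(x,y)=\sum_{k=0}^nq^k(x,y)$. *)

theory Defs
  imports "HOL-Probability.Probability"
begin

text \<open>The law of a single environment site: a probability measure mu on random
  probability vectors u :: int => real (Borel sigma-algebra of the product topology).
  All quantities in the statement depend only on this one-site law.\<close>

definition prob_vector :: "nat \<Rightarrow> (int \<Rightarrow> real) \<Rightarrow> bool" where
  "prob_vector M u \<longleftrightarrow> (\<forall>y. 0 \<le> u y) \<and> (\<forall>y. \<bar>y\<bar> > int M \<longrightarrow> u y = 0)
      \<and> (\<Sum>y\<in>{-int M..int M}. u y) = 1"

definition env_law :: "nat \<Rightarrow> (int \<Rightarrow> real) measure \<Rightarrow> bool" where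
  "env_law M \<mu> \<longleftrightarrow> prob_space \<mu> \<and> sets \<mu> = sets borel \<and> (AE u in \<mu>. prob_vector M u)"

definition pker :: "(int \<Rightarrow> real) measure \<Rightarrow> int \<Rightarrow> real" where
  "pker \<mu> j = (\<integral>u. u j \<partial>\<mu>)"

definition Vel :: "(int \<Rightarrow> real) measure \<Rightarrow> real" where
  "Vel \<mu> = (\<Sum>\<^sub>\<infinity>j\<in>(UNIV::int set). of_int j * pker \<mu> j)"

definition sigma_a2 :: "(int \<Rightarrow> real) measure \<Rightarrow> real" where
  "sigma_a2 \<mu> = (\<Sum>\<^sub>\<infinity>x\<in>(UNIV::int set). (of_int x - Vel \<mu>)\<^sup>2 * pker \<mu> x)"

definition lam :: "(int \<Rightarrow> real) measure \<Rightarrow> real \<Rightarrow> real" where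
  "lam \<mu> t = (\<integral>u. (cmod (\<Sum>\<^sub>\<infinity>x\<in>(UNIV::int set). complex_of_real (u x) * cis (t * of_int x)))\<^sup>2 \<partial>\<mu>)"

definition lam_bar :: "(int \<Rightarrow> real) measure \<Rightarrow> real \<Rightarrow> real" where
  "lam_bar \<mu> t = (cmod (\<Sum>\<^sub>\<infinity>x\<in>(UNIV::int set). complex_of_real (pker \<mu> x) * cis (t * of_int x)))\<^sup>2"

definition beta :: "(int \<Rightarrow> real) measure \<Rightarrow> real" where
  "beta \<mu> = 1 / (2 * pi) * integral {-pi..pi} (\<lambda>t. (1 - lam \<mu> t) / (1 - lam_bar \<mu> t))"

text \<open>Transition kernel of the difference walk.\<close>
definition qker :: "(int \<Rightarrow> real) measure \<Rightarrow> int \<Rightarrow> int \<Rightarrow> real" where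
  "qker \<mu> x y = (if x = 0
     then (\<Sum>\<^sub>\<infinity>z\<in>(UNIV::int set). \<integral>u. u z * u (z + y) \<partial>\<mu>)
     else (\<Sum>\<^sub>\<infinity>z\<in>(UNIV::int set). pker \<mu> z * pker \<mu> (z + y - x)))"

fun qpow :: "(int \<Rightarrow> real) measure \<Rightarrow> nat \<Rightarrow> int \<Rightarrow> int \<Rightarrow> real" where
  "qpow \<mu> 0 x y = (if x = y then 1 else 0)"
| "qpow \<mu> (Suc k) x y = (\<Sum>\<^sub>\<infinity>w\<in>(UNIV::int set). qpow \<mu> k x w * qker \<mu> w y)"

definition Gn :: "(int \<Rightarrow> real) measure \<Rightarrow> nat \<Rightarrow> int \<Rightarrow> int \<Rightarrow> real" where
  "Gn \<mu> n x y = (\<Sum>k\<le>n. qpow \<mu> k x y)"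

definition A1 :: "(int \<Rightarrow> real) measure \<Rightarrow> bool" where
  "A1 \<mu> \<longleftrightarrow> \<not> (\<exists>h::int. \<exists>x::int. h > 1 \<and> (\<Sum>\<^sub>\<infinity>k\<in>(UNIV::int set). pker \<mu> (x + k * h)) = 1)"

definition A2 :: "nat \<Rightarrow> (int \<Rightarrow> real) measure \<Rightarrow> bool" where
  "A2 M \<mu> \<longleftrightarrow> measure \<mu> {u \<in> space \<mu>. Max ((\<lambda>j. u j) ` {-int M..int M}) < 1} > 0"

end

theory Submission
  imports Defs
begin

(*
  The difference Y of two walks in a common environment is a random walk with the homogeneous
  kernel qbar(y) = sum_z p(z) p(z + y) of the difference of two independent p-steps, except at the
  origin, where its kernel is q(0,.) = qbar + d.  Treating d as a perturbation at the origin gives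

    q^k(x,z) = qbar^k(x,z) + sum_{j<k} q^j(x,0) (d * qbar^(k-1-j))(z),

  and in Fourier variables qbar^k(x,0) and (d * qbar^m)(0) are the integrals of
  lambda-bar^k cos(t x) and lambda-bar^m (lambda - lambda-bar) over [-pi,pi].  Hence the partial
  sums of (d * qbar^m)(0) tend to 1 - beta, and summing the identity over k <= n gives
  beta G_n(x,0) = Gbar_n(x,0) + o(G_n(x,0)) + O(1), where Gbar_n is the Green function of qbar.
  Aperiodicity (A1) gives 1 - lambda-bar(t) >= c t^2 on [-pi,pi], and (A2) gives q(0,0) < 1,
  whence beta > 0.  Since the second moment of qbar is 2 sigma_a^2, the substitution t = s / sqrt n
  and dominated convergence give

    Gbar_n(x_n,0) / sqrt n --> (1/2pi) int (1 - exp(-sigma_a^2 s^2)) / (sigma_a^2 s^2) cos(s x) ds.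

  Writing the first factor as int_0^1 exp(-sigma_a^2 s^2 w) dw, Fubini and the Fourier transform
  of the Gaussian turn this into the integral of Gaussian densities in the statement.
*)

lemma infsum_UNIV_eq_sum:
  fixes f :: "'a \<Rightarrow> 'b::{comm_monoid_add,t2_space}"
  assumes "finite S" "\<And>x. x \<notin> S \<Longrightarrow> f x = 0"
  shows "infsum f UNIV = sum f S"
proof -
  have "infsum f UNIV = infsum f S" by (rule infsum_cong_neutral) (use assms in auto)
  then show ?thesis using assms by simp
qed

lemma infsum_UNIV_nat_complex:
  fixes h :: "nat \<Rightarrow> complex"
  shows "infsum h UNIV = (if summable (\<lambda>n. norm (h n)) then suminf h else 0)"
proof (cases "summable (\<lambda>n. norm (h n))")
  case True
  then have "(h has_sum suminf h) UNIV"
    by (intro norm_summable_imp_has_sum) (auto intro: summable_norm_cancel summable_sums)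
  then show ?thesis using True by (simp add: infsumI)
next
  case False
  have "\<not> h summable_on UNIV"
  proof
    assume "h summable_on UNIV"
    then have "(\<lambda>n. norm (h n)) summable_on UNIV"
      using summable_on_iff_abs_summable_on_complex by blast
    then have "summable (\<lambda>n. norm (h n))"
      by (subst summable_on_UNIV_nonneg_real_iff[symmetric]) auto
    with False show False by simp
  qed
  then show ?thesis using False by (simp add: infsum_not_exists)
qed

lemma summable_iff_suminf_ennreal_neq_top:
  fixes a :: "nat \<Rightarrow> real"
  assumes "\<And>n. 0 \<le> a n"
  shows "summable a \<longleftrightarrow> (\<Sum>n. ennreal (a n)) \<noteq> top"
proof
  assume "summable a"
  then show "(\<Sum>n. ennreal (a n)) \<noteq> top" using suminf_ennreal2[OF assms] by simp
next
  assume "(\<Sum>n. ennreal (a n)) \<noteq> top"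
  then show "summable a" using summable_iff_suminf_neq_top[of a] assms by blast
qed

lemma borel_measurable_infsum_int:
  fixes f :: "'a \<Rightarrow> int \<Rightarrow> complex"
  assumes [measurable]: "\<And>x. (\<lambda>u. f u x) \<in> borel_measurable N"
  shows "(\<lambda>u. infsum (f u) UNIV) \<in> borel_measurable N"
proof -
  have bij: "bij_betw int_decode UNIV UNIV" using bij_int_decode by (simp add: bij_def)
  have eq: "infsum (f u) UNIV = (if (\<Sum>n. ennreal (norm (f u (int_decode n)))) \<noteq> top
              then (\<Sum>n. f u (int_decode n)) else 0)" for u
  proof -
    have "infsum (f u) UNIV = infsum (\<lambda>n. f u (int_decode n)) UNIV"
      using infsum_reindex_bij_betw[OF bij, of "f u"] by simp
    also have "\<dots> = (if summable (\<lambda>n. norm (f u (int_decode n))) then (\<Sum>n. f u (int_decode n)) else 0)"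
      by (rule infsum_UNIV_nat_complex)
    also have "\<dots> = (if (\<Sum>n. ennreal (norm (f u (int_decode n)))) \<noteq> top
              then (\<Sum>n. f u (int_decode n)) else 0)"
      by (subst summable_iff_suminf_ennreal_neq_top) auto
    finally show ?thesis .
  qed
  show ?thesis unfolding eq by measurable
qed

lemma sum_convolution_partial_sums:
  fixes g h :: "nat \<Rightarrow> 'a::comm_semiring_0"
  shows "(\<Sum>k\<le>n. \<Sum>j<k. g j * h (k - 1 - j)) = (\<Sum>j<n. g j * (\<Sum>i\<le>n - 1 - j. h i))"
proof (induction n)
  case 0 then show ?case by simp
next
  case (Suc n)
  have split: "(\<Sum>i\<le>n - j. h i) = (\<Sum>i\<le>n - 1 - j. h i) + h (n - j)" if "j < n" for j
  proof -
    have "n - j = Suc (n - 1 - j)" using that by simp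
    then show ?thesis by simp
  qed
  have "(\<Sum>k\<le>Suc n. \<Sum>j<k. g j * h (k - 1 - j))
      = (\<Sum>j<n. g j * (\<Sum>i\<le>n - 1 - j. h i)) + (\<Sum>j<Suc n. g j * h (n - j))"
    using Suc by simp
  also have "\<dots> = (\<Sum>j<n. g j * (\<Sum>i\<le>n - j. h i)) + g n * h 0"
    by (simp add: split sum.distrib algebra_simps)
  finally show ?case by simp
qed

lemma sum_squares_le_Max:
  fixes u :: "'a \<Rightarrow> real"
  assumes "finite A" "\<And>z. z \<in> A \<Longrightarrow> 0 \<le> u z" "sum u A = 1"
  shows "(\<Sum>z\<in>A. u z * u z) \<le> Max (u ` A)"
proof -
  have "(\<Sum>z\<in>A. u z * u z) \<le> (\<Sum>z\<in>A. u z * Max (u ` A))"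
    using assms(1,2) by (intro sum_mono mult_left_mono) auto
  also have "\<dots> = Max (u ` A)" using assms(3) by (simp flip: sum_distrib_right)
  finally show ?thesis .
qed

lemma cmod_sum_cis_squared:
  fixes v :: "int \<Rightarrow> real" and A :: "int set"
  shows "(cmod (\<Sum>x\<in>A. complex_of_real (v x) * cis (t * of_int x)))\<^sup>2
        = (\<Sum>x\<in>A. \<Sum>w\<in>A. v x * v w * cos (t * of_int (x - w)))"
proof -
  let ?Z = "\<Sum>x\<in>A. complex_of_real (v x) * cis (t * of_int x)"
  have re: "Re ?Z = (\<Sum>x\<in>A. v x * cos (t * of_int x))" by (simp add: Re_sum)
  have im: "Im ?Z = (\<Sum>x\<in>A. v x * sin (t * of_int x))" by (simp add: Im_sum)
  have "(cmod ?Z)\<^sup>2 = (\<Sum>x\<in>A. \<Sum>w\<in>A. v x * cos (t * of_int x) * (v w * cos (t * of_int w))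
        + v x * sin (t * of_int x) * (v w * sin (t * of_int w)))"
    unfolding cmod_power2 re im by (simp add: power2_eq_square sum_product sum.distrib)
  also have "\<dots> = (\<Sum>x\<in>A. \<Sum>w\<in>A. v x * v w * cos (t * of_int (x - w)))"
    by (intro sum.cong refl) (simp add: cos_diff algebra_simps)
  finally show ?thesis .
qed

lemma integral_cos_int_mult:
  "integral {-pi..pi} (\<lambda>t. cos (t * of_int n)) = (if n = 0 then 2 * pi else 0)"
proof (cases "n = 0")
  case True then show ?thesis by simp
next
  case False
  have "((\<lambda>t. cos (t * of_int n)) has_integral
      (sin (pi * of_int n) / of_int n - sin (- pi * of_int n) / of_int n)) {-pi..pi}"
  proof (rule fundamental_theorem_of_calculus)
    fix x :: real
    show "((\<lambda>t. sin (t * of_int n) / of_int n) has_vector_derivative cos (x * of_int n))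
        (at x within {-pi..pi})"
      unfolding has_real_derivative_iff_has_vector_derivative[symmetric]
      using False by (auto intro!: derivative_eq_intros)
  qed simp
  then show ?thesis using False
    by (simp add: integral_unique del: mult_minus_left)
qed

lemma one_minus_cos_eq: "1 - cos u = 2 * sin (u / 2) ^ 2" for u :: real
proof -
  have "cos u = cos (2 * (u / 2))" by simp
  also have "\<dots> = 1 - 2 * sin (u / 2) ^ 2" by (rule cos_double_sin)
  finally show ?thesis by simp
qed

lemma one_minus_cos_le: "1 - cos u \<le> (u::real)\<^sup>2 / 2"
proof -
  have "\<bar>sin (u / 2)\<bar>\<^sup>2 \<le> \<bar>u / 2\<bar>\<^sup>2"
    using abs_sin_x_le_abs_x[of "u / 2"] by (intro power_mono) auto
  then show ?thesis by (simp add: one_minus_cos_eq power_divide)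
qed

lemma one_minus_cos_over_square_tendsto:
  "((\<lambda>t. (1 - cos (t * y)) / t\<^sup>2) \<longlongrightarrow> y\<^sup>2 / 2) (at (0::real))"
proof (cases "y = 0")
  case True then show ?thesis by simp
next
  case False
  have sinc: "((\<lambda>h::real. sin h / h) \<longlongrightarrow> 1) (at 0)"
    using DERIV_sin[of 0] unfolding has_field_derivative_iff by simp
  have "filterlim (\<lambda>t. t * y / 2) (at 0) (at (0::real))"
    using False by (intro filterlim_atI) (auto intro!: tendsto_eq_intros simp: eventually_at_filter)
  from filterlim_compose[OF sinc this]
  have "((\<lambda>t. y\<^sup>2 / 2 * (sin (t * y / 2) / (t * y / 2))\<^sup>2) \<longlongrightarrow> y\<^sup>2 / 2 * 1\<^sup>2) (at 0)"
    by (intro tendsto_intros)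
  moreover have "y\<^sup>2 / 2 * (sin (t * y / 2) / (t * y / 2))\<^sup>2 = (1 - cos (t * y)) / t\<^sup>2"
    if "t \<noteq> 0" for t
    unfolding one_minus_cos_eq[of "t * y"] using that False by (simp add: field_simps power2_eq_square)
  then have "eventually (\<lambda>t. y\<^sup>2 / 2 * (sin (t * y / 2) / (t * y / 2))\<^sup>2
      = (1 - cos (t * y)) / t\<^sup>2) (at (0::real))"
    by (auto simp: eventually_at_filter)
  ultimately show ?thesis by (simp add: Lim_transform_eventually)
qed

lemma cos_eq_1_diff_mult:
  fixes s :: real
  assumes "cos (s * of_int a) = 1" "cos (s * of_int b) = 1"
  shows "cos (s * of_int (a - b * k)) = 1"
proof -
  obtain n1 :: int where n1: "s * of_int a = of_int n1 * 2 * pi" using assms(1) cos_one_2pi_int by blast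
  obtain n2 :: int where n2: "s * of_int b = of_int n2 * 2 * pi" using assms(2) cos_one_2pi_int by blast
  have "s * of_int (a - b * k) = s * of_int a - (s * of_int b) * of_int k"
    by (simp add: algebra_simps)
  also have "\<dots> = of_int (n1 - n2 * k) * 2 * pi"
    unfolding n1 n2 by (simp add: algebra_simps)
  finally have "s * of_int (a - b * k) = of_int (n1 - n2 * k) * 2 * pi" .
  then show ?thesis using cos_one_2pi_int by blast
qed

lemma cos_ne_1_pi_interval:
  fixes s :: real
  assumes "0 < s" "s \<le> pi"
  shows "cos s \<noteq> 1"
proof
  assume "cos s = 1"
  then obtain n :: int where n: "s = of_int n * 2 * pi" using cos_one_2pi_int by blast
  then have "0 < n" using assms pi_gt_zero by (simp add: zero_less_mult_iff)
  then have "2 * pi \<le> s" using n pi_gt_zero by simp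
  then show False using assms pi_gt_zero by linarith
qed

lemma common_divisor_if_cos_eq_1:
  fixes s :: real and S :: "int set"
  assumes s: "0 < s" "s \<le> pi" and z0: "z0 \<in> S"
    and cos1: "\<And>w. w \<in> S \<Longrightarrow> cos (s * of_int (w - z0)) = 1"
  shows "\<exists>h::int. h > 1 \<and> (\<forall>w\<in>S. h dvd w - z0)"
proof (cases "S \<subseteq> {z0}")
  case True then show ?thesis by (intro exI[of _ 2]) auto
next
  case False
  then obtain w1 where w1: "w1 \<in> S" "w1 \<noteq> z0" by blast
  define P where "P m \<longleftrightarrow> 0 < m \<and> cos (s * of_int (int m)) = 1" for m :: nat
  have "cos (s * of_int \<bar>e\<bar>) = cos (s * of_int e)" for e
    by (cases "e \<ge> 0") (auto simp: abs_if)
  then have "cos (s * of_int \<bar>w1 - z0\<bar>) = 1" using cos1[OF w1(1)] by presburger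
  then have "P (nat \<bar>w1 - z0\<bar>)" using w1(2) by (auto simp: P_def)
  then have Ph: "P (LEAST m. P m)" by (rule LeastI)
  define h where "h = int (LEAST m. P m)"
  have "h \<noteq> 1" using Ph cos_ne_1_pi_interval[OF s] by (auto simp: P_def h_def)
  then have "h > 1" using Ph by (auto simp: P_def h_def)
  moreover have "h dvd w - z0" if "w \<in> S" for w
  proof -
    define e where "e = w - z0"
    \<comment> \<open>the residue of e modulo the least period h is again a period, hence 0\<close>
    have ce: "cos (s * of_int e) = 1" using cos1[OF that] by (simp add: e_def)
    have ch: "cos (s * of_int h) = 1" using Ph by (simp add: P_def h_def)
    have "cos (s * of_int (e - h * (e div h))) = 1" by (rule cos_eq_1_diff_mult[OF ce ch])
    then have "cos (s * of_int (int (nat (e mod h)))) = 1"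
      using \<open>h > 1\<close> by (simp add: minus_div_mult_eq_mod[symmetric] mult.commute)
    moreover have "0 \<le> e mod h" "e mod h < h" using \<open>h > 1\<close> by auto
    then have "nat (e mod h) < (LEAST m. P m)" by (simp add: h_def nat_less_iff)
    ultimately have "e mod h = 0"
      using not_less_Least[of "nat (e mod h)" P] \<open>0 \<le> e mod h\<close> by (auto simp: P_def)
    then show ?thesis by (simp add: e_def dvd_eq_mod_eq_0)
  qed
  ultimately show ?thesis by blast
qed

lemma quadratic_lower_bound:
  fixes f :: "real \<Rightarrow> real"
  assumes "0 < a" and cont: "continuous_on {-a..a} f" and "0 \<le> f 0"
    and pos: "\<And>t. t \<in> {-a..a} \<Longrightarrow> t \<noteq> 0 \<Longrightarrow> 0 < f t"
    and lim: "((\<lambda>t. f t / t\<^sup>2) \<longlongrightarrow> A) (at 0)" and "0 < A"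
  shows "\<exists>c>0. \<forall>t\<in>{-a..a}. c * t\<^sup>2 \<le> f t"
proof -
  from order_tendstoD(1)[OF lim, of "A / 2"] \<open>0 < A\<close>
  obtain \<delta> where \<delta>: "\<delta> > 0" "\<And>t. t \<noteq> 0 \<Longrightarrow> \<bar>t\<bar> < \<delta> \<Longrightarrow> A / 2 < f t / t\<^sup>2"
    unfolding eventually_at by (auto simp: dist_real_def)
  define \<delta>' where "\<delta>' = min \<delta> a"
  have \<delta>': "0 < \<delta>'" "\<delta>' \<le> a" "\<delta>' \<le> \<delta>" using \<delta> \<open>0 < a\<close> by (auto simp: \<delta>'_def)
  define K where "K = {-a..-\<delta>'} \<union> {\<delta>'..a}"
  have "compact K" "K \<noteq> {}" using \<delta>' by (auto simp: K_def intro!: compact_Un)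
  moreover have "continuous_on K f" by (rule continuous_on_subset[OF cont]) (use \<delta>' in \<open>auto simp: K_def\<close>)
  ultimately obtain t0 where t0: "t0 \<in> K" "\<And>t. t \<in> K \<Longrightarrow> f t0 \<le> f t"
    using continuous_attains_inf[of K f] by blast
  have m: "0 < f t0" using t0(1) \<delta>' by (intro pos) (auto simp: K_def)
  define c where "c = min (A / 2) (f t0 / a\<^sup>2)"
  have "c * t\<^sup>2 \<le> f t" if t: "t \<in> {-a..a}" for t
  proof (cases "\<bar>t\<bar> < \<delta>'")
    case True
    show ?thesis
    proof (cases "t = 0")
      case False
      then have "A / 2 * t\<^sup>2 \<le> f t" using \<delta>(2)[of t] True \<delta>' by (simp add: field_simps)
      moreover have "c \<le> A / 2" unfolding c_def by (rule min.cobounded1)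
      then have "c * t\<^sup>2 \<le> A / 2 * t\<^sup>2" by (intro mult_right_mono) auto
      ultimately show ?thesis by linarith
    qed (use \<open>0 \<le> f 0\<close> in simp)
  next
    case False
    then have "t \<in> K" using t by (cases "t \<ge> 0") (auto simp: K_def)
    then have "f t0 \<le> f t" by (rule t0(2))
    moreover have "t\<^sup>2 \<le> a\<^sup>2" using t \<open>0 < a\<close> by (simp add: power2_le_iff_abs_le abs_le_iff)
    then have "c * t\<^sup>2 \<le> f t0 / a\<^sup>2 * a\<^sup>2" using m by (intro mult_mono) (auto simp: c_def)
    ultimately show ?thesis using \<open>0 < a\<close> by simp
  qed
  moreover have "c > 0" using m \<open>0 < A\<close> \<open>0 < a\<close> by (simp add: c_def)
  ultimately show ?thesis by blast
qed

lemma sum_power_le_inverse: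
  fixes x :: real assumes "0 \<le> x" "x < 1"
  shows "(\<Sum>i\<le>m. x ^ i) \<le> 1 / (1 - x)"
proof -
  have "(\<Sum>i\<le>m. x ^ i) = (1 - x ^ Suc m) / (1 - x)" using sum_gp0[of x m] assms by simp
  also have "\<dots> \<le> 1 / (1 - x)" using assms by (intro divide_right_mono) auto
  finally show ?thesis .
qed

lemma sum_power_tendsto:
  fixes x :: real assumes "\<bar>x\<bar> < 1"
  shows "(\<lambda>m. \<Sum>i\<le>m. x ^ i) \<longlonglongrightarrow> 1 / (1 - x)"
  using geometric_sums[of x] assms LIMSEQ_lessThan_iff_atMost[of "\<lambda>A. \<Sum>i\<in>A. x ^ i"]
  by (simp add: sums_def)

lemma le_inverse_one_plus_square:
  fixes c E s :: real
  assumes "0 < c" "E \<le> 2" "s \<noteq> 0 \<Longrightarrow> E \<le> 1 / (c * s\<^sup>2)"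
  shows "E \<le> (4 + 2 / c) * inverse (1 + s\<^sup>2)"
proof (cases "s\<^sup>2 \<le> 1")
  case True
  have "E * (1 + s\<^sup>2) \<le> 2 * (1 + s\<^sup>2)" using \<open>E \<le> 2\<close> by (intro mult_right_mono) auto
  also have "\<dots> \<le> 4 + 2 / c" using True \<open>0 < c\<close> by (simp add: add_increasing2)
  finally show ?thesis by (simp add: field_simps add_pos_nonneg)
next
  case False
  then have "s \<noteq> 0" by auto
  have "(4 + 2 / c) * (c * s\<^sup>2) = 4 * c * s\<^sup>2 + 2 * s\<^sup>2" using \<open>0 < c\<close> by (simp add: field_simps)
  moreover have "0 \<le> 4 * c * s\<^sup>2" using \<open>0 < c\<close> by simp
  ultimately have "1 + s\<^sup>2 \<le> (4 + 2 / c) * (c * s\<^sup>2)" using False by linarith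
  then have "1 / (c * s\<^sup>2) \<le> (4 + 2 / c) * inverse (1 + s\<^sup>2)"
    using \<open>0 < c\<close> \<open>s \<noteq> 0\<close> by (simp add: field_simps add_pos_nonneg)
  then show ?thesis using assms(3)[OF \<open>s \<noteq> 0\<close>] by linarith
qed

lemma tendsto_const_div_sqrt: "(\<lambda>n. (B::real) / sqrt (real n)) \<longlonglongrightarrow> 0"
  by (rule tendsto_divide_0[OF tendsto_const filterlim_at_top_imp_at_infinity])
     (rule filterlim_compose[OF sqrt_at_top filterlim_real_sequentially])

lemma tendsto_div_real_0:
  fixes f :: "nat \<Rightarrow> real" assumes "f \<longlonglongrightarrow> L" shows "(\<lambda>n. f n / real n) \<longlonglongrightarrow> 0"
  by (rule tendsto_divide_0[OF assms filterlim_at_top_imp_at_infinity[OF filterlim_real_sequentially]])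

lemma tendsto_one_minus_div_power:
  fixes y :: "nat \<Rightarrow> real"
  assumes y: "y \<longlonglongrightarrow> L"
  shows "(\<lambda>n. (1 - y n / real n) ^ n) \<longlonglongrightarrow> exp (- L)"
proof -
  have small: "eventually (\<lambda>n. \<bar>y n / real n\<bar> < 1/2) sequentially"
    using tendstoD[OF tendsto_div_real_0[OF y], of "1/2"] by (simp add: dist_real_def)
  have "eventually (\<lambda>n. \<bar>real n * ln (1 - y n / real n) + y n\<bar> \<le> 2 * (y n)\<^sup>2 / real n) sequentially"
    using small eventually_gt_at_top[of 0]
  proof eventually_elim
    case (elim n)
    have "\<bar>ln (1 + (- (y n / real n))) - (- (y n / real n))\<bar> \<le> 2 * (- (y n / real n))\<^sup>2"
      by (rule abs_ln_one_plus_x_minus_x_bound) (use elim in auto)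
    then have "real n * \<bar>ln (1 - y n / real n) + y n / real n\<bar> \<le> real n * (2 * (y n / real n)\<^sup>2)"
      by (intro mult_left_mono) auto
    also have "real n * \<bar>ln (1 - y n / real n) + y n / real n\<bar>
        = \<bar>real n * (ln (1 - y n / real n) + y n / real n)\<bar>"
      by (simp add: abs_mult)
    also have "real n * (ln (1 - y n / real n) + y n / real n) = real n * ln (1 - y n / real n) + y n"
      using elim by (simp add: distrib_left)
    finally show ?case using elim by (simp add: power2_eq_square field_simps)
  qed
  moreover have "(\<lambda>n. 2 * (y n)\<^sup>2 / real n) \<longlonglongrightarrow> 0"
    by (rule tendsto_div_real_0[where L="2 * L\<^sup>2"]) (intro tendsto_intros y)
  ultimately have "(\<lambda>n. real n * ln (1 - y n / real n) + y n) \<longlonglongrightarrow> 0"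
    by (rule Lim_null_comparison[where f="\<lambda>n. real n * ln (1 - y n / real n) + y n", simplified])
  then have "(\<lambda>n. exp ((real n * ln (1 - y n / real n) + y n) - y n)) \<longlonglongrightarrow> exp (0 - L)"
    by (intro tendsto_intros y)
  moreover have "eventually (\<lambda>n. exp ((real n * ln (1 - y n / real n) + y n) - y n)
      = (1 - y n / real n) ^ n) sequentially"
    using small
  proof eventually_elim
    case (elim n)
    then have "0 < 1 - y n / real n" by linarith
    then show ?case by (simp add: ln_realpow[symmetric])
  qed
  ultimately show ?thesis by (simp add: Lim_transform_eventually)
qed

lemma tendsto_of_relative_error:
  fixes a b e :: "nat \<Rightarrow> real"
  assumes "0 < \<beta>" and a: "\<And>n. 0 \<le> a n" and b: "b \<longlonglongrightarrow> L" and e: "e \<longlonglongrightarrow> 0"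
    and err: "\<And>\<delta>. \<delta> > 0 \<Longrightarrow> \<exists>R. \<forall>n. \<bar>\<beta> * a n - b n\<bar> \<le> \<delta> * a n + R * e n"
  shows "a \<longlonglongrightarrow> L / \<beta>"
proof -
  obtain R0 where R0: "\<And>n. \<bar>\<beta> * a n - b n\<bar> \<le> \<beta> / 2 * a n + R0 * e n"
    using err[of "\<beta> / 2"] \<open>0 < \<beta>\<close> by auto
  have "(\<lambda>n. 2 / \<beta> * (b n + R0 * e n)) \<longlonglongrightarrow> 2 / \<beta> * (L + R0 * 0)"
    by (intro tendsto_intros b e)
  then have "convergent (\<lambda>n. 2 / \<beta> * (b n + R0 * e n))" by (auto simp: convergent_def)
  then have "Bseq (\<lambda>n. 2 / \<beta> * (b n + R0 * e n))" by (rule convergent_imp_Bseq)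
  then obtain A where A: "0 < A" "\<And>n. norm (2 / \<beta> * (b n + R0 * e n)) \<le> A"
    by (rule BseqE) blast
  have a_le: "a n \<le> A" for n
  proof -
    have "\<beta> * a n - b n \<le> \<beta> / 2 * a n + R0 * e n" using R0[of n] by linarith
    then have "\<beta> / 2 * a n \<le> b n + R0 * e n" by linarith
    then have "a n \<le> 2 / \<beta> * (b n + R0 * e n)" using \<open>0 < \<beta>\<close> by (simp add: field_simps)
    moreover have "2 / \<beta> * (b n + R0 * e n) \<le> A" using A(2)[of n] by (simp only: real_norm_def abs_le_iff)
    ultimately show ?thesis by linarith
  qed
  have "(\<lambda>n. \<beta> * a n - b n) \<longlonglongrightarrow> 0"
  proof (rule tendstoI)
    fix \<epsilon> :: real assume "0 < \<epsilon>"
    then obtain R where R: "\<And>n. \<bar>\<beta> * a n - b n\<bar> \<le> \<epsilon> / (2 * A) * a n + R * e n"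
      using err[of "\<epsilon> / (2 * A)"] A(1) by auto
    have "(\<lambda>n. R * e n) \<longlonglongrightarrow> R * 0" by (intro tendsto_intros e)
    from tendstoD[OF this, of "\<epsilon> / 2"] \<open>0 < \<epsilon>\<close>
    have "eventually (\<lambda>n. \<bar>R * e n\<bar> < \<epsilon> / 2) sequentially" by (simp add: dist_real_def)
    then show "eventually (\<lambda>n. dist (\<beta> * a n - b n) 0 < \<epsilon>) sequentially"
    proof eventually_elim
      case (elim n)
      have "\<epsilon> / (2 * A) * a n \<le> \<epsilon> / (2 * A) * A"
        using a_le[of n] \<open>0 < \<epsilon>\<close> A(1) by (intro mult_left_mono) auto
      also have "\<dots> = \<epsilon> / 2" using A(1) by simp
      finally have "\<bar>\<beta> * a n - b n\<bar> < \<epsilon>" using R[of n] elim by linarith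
      then show ?case by (simp add: dist_real_def)
    qed
  qed
  then have "(\<lambda>n. ((\<beta> * a n - b n) + b n) / \<beta>) \<longlonglongrightarrow> (0 + L) / \<beta>"
    by (intro tendsto_intros b) (use \<open>0 < \<beta>\<close> in auto)
  then show ?thesis using \<open>0 < \<beta>\<close> by simp
qed

lemma eventually_abs_le_pi_sqrt: "eventually (\<lambda>n. 1 \<le> n \<and> \<bar>s\<bar> \<le> pi * sqrt (real n)) sequentially"
proof -
  have "1 \<le> n \<and> \<bar>s\<bar> \<le> pi * sqrt (real n)" if "nat \<lceil>s\<^sup>2\<rceil> + 1 \<le> n" for n
  proof
    show "1 \<le> n" using that by simp
    have "s\<^sup>2 \<le> real n" using that by linarith
    then have "\<bar>s\<bar> \<le> 1 * sqrt (real n)" using real_sqrt_le_mono by fastforce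
    also have "\<dots> \<le> pi * sqrt (real n)" by (rule mult_right_mono) (use pi_gt3 in auto)
    finally show "\<bar>s\<bar> \<le> pi * sqrt (real n)" .
  qed
  then show ?thesis unfolding eventually_sequentially by blast
qed

lemma div_sqrt_mem_pi_interval:
  assumes "1 \<le> n" "\<bar>s\<bar> \<le> pi * sqrt (real n)"
  shows "s / sqrt (real n) \<in> {-pi..pi}"
proof -
  have "\<bar>s / sqrt (real n)\<bar> \<le> pi" using assms by (simp add: abs_div divide_le_eq mult.commute)
  then show ?thesis by (simp only: atLeastAtMost_iff) (metis abs_le_iff minus_le_iff)
qed

subsection \<open>A renewal argument\<close>

lemma abs_sum_weighted_tail_le:
  fixes g eps :: "nat \<Rightarrow> real"
  assumes g: "\<And>j. 0 \<le> g j" "\<And>j. g j \<le> 1"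
    and C: "\<And>m. \<bar>eps m\<bar> \<le> C"
    and K: "\<And>m. m \<ge> K \<Longrightarrow> \<bar>eps m\<bar> \<le> \<delta>"
  shows "\<bar>\<Sum>j<n. g j * eps (n - 1 - j)\<bar> \<le> \<delta> * (\<Sum>j<n. g j) + real K * C"
proof -
  have C0: "0 \<le> C" using C[of 0] by linarith
  have "0 \<le> \<delta>" using K[of K] by linarith
  have "\<bar>\<Sum>j<n. g j * eps (n - 1 - j)\<bar> \<le> (\<Sum>j<n. \<bar>g j * eps (n - 1 - j)\<bar>)" by (rule sum_abs)
  also have "\<dots> \<le> (\<Sum>j<n. \<delta> * g j + (if n - 1 - j < K then C else 0))"
  proof (rule sum_mono)
    fix j
    show "\<bar>g j * eps (n - 1 - j)\<bar> \<le> \<delta> * g j + (if n - 1 - j < K then C else 0)"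
    proof (cases "n - 1 - j < K")
      case True
      have "\<bar>g j * eps (n - 1 - j)\<bar> \<le> 1 * C"
        unfolding abs_mult using g[of j] C[of "n - 1 - j"] by (intro mult_mono) auto
      moreover have "0 \<le> \<delta> * g j" using \<open>0 \<le> \<delta>\<close> g(1)[of j] by simp
      ultimately show ?thesis using True by simp
    next
      case False
      have "\<bar>g j * eps (n - 1 - j)\<bar> \<le> g j * \<delta>"
        unfolding abs_mult using g[of j] K[of "n - 1 - j"] False by (intro mult_mono) auto
      then show ?thesis using False by (simp add: mult.commute)
    qed
  qed
  also have "\<dots> = \<delta> * (\<Sum>j<n. g j) + (\<Sum>m<n. if m < K then C else 0)"
    using sum.nat_diff_reindex[of "\<lambda>m. if m < K then C else 0" n]
    by (simp add: sum.distrib sum_distrib_left)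
  also have "(\<Sum>m<n. if m < K then C else 0) = (\<Sum>m\<in>{..<n} \<inter> {..<K}. C)"
    using sum.inter_restrict[of "{..<n}" "\<lambda>_. C" "{..<K}"] by simp
  also have "\<dots> \<le> (\<Sum>m<K. C)" by (rule sum_mono2) (use C0 in auto)
  finally show ?thesis by simp
qed

lemma renewal_perturbation_bound:
  fixes G Gb S :: "nat \<Rightarrow> real" and g :: "nat \<Rightarrow> nat \<Rightarrow> real"
  assumes S: "S \<longlonglongrightarrow> 1 - \<beta>"
    and g: "\<And>n j. 0 \<le> g n j" "\<And>n j. g n j \<le> 1"
    and G: "\<And>n. G n = (\<Sum>j\<le>n. g n j)"
    and renewal: "\<And>n. G n = Gb n + (\<Sum>j<n. g n j * S (n - 1 - j))"
    and "0 < \<delta>"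
  shows "\<exists>R. \<forall>n. \<bar>\<beta> * G n - Gb n\<bar> \<le> \<delta> * G n + R"
proof -
  define eps where "eps m = S m - (1 - \<beta>)" for m
  have "eps \<longlonglongrightarrow> 0" unfolding eps_def using S by (simp add: LIM_zero)
  then obtain C where C: "\<And>m. \<bar>eps m\<bar> \<le> C"
    using convergent_imp_Bseq[of eps] by (auto simp: convergent_def Bseq_def)
  obtain K where K: "\<And>m. m \<ge> K \<Longrightarrow> \<bar>eps m\<bar> \<le> \<delta>"
    using \<open>eps \<longlonglongrightarrow> 0\<close> \<open>0 < \<delta>\<close> unfolding LIMSEQ_def dist_real_def
    by (metis diff_zero less_eq_real_def)
  have "\<bar>\<beta> * G n - Gb n\<bar> \<le> \<delta> * G n + (\<bar>1 - \<beta>\<bar> + real K * C)" for n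
  proof -
    have G_less: "(\<Sum>j<n. g n j) = G n - g n n" unfolding G by (simp add: lessThan_Suc_atMost[symmetric])
    have "(\<Sum>j<n. g n j * S (n - 1 - j))
        = (\<Sum>j<n. (1 - \<beta>) * g n j + g n j * eps (n - 1 - j))"
      by (intro sum.cong) (simp_all add: eps_def algebra_simps)
    also have "\<dots> = (1 - \<beta>) * (\<Sum>j<n. g n j) + (\<Sum>j<n. g n j * eps (n - 1 - j))"
      by (simp add: sum.distrib sum_distrib_left)
    finally have "G n = Gb n + (1 - \<beta>) * (G n - g n n) + (\<Sum>j<n. g n j * eps (n - 1 - j))"
      using renewal[of n] unfolding G_less by linarith
    then have eq: "\<beta> * G n - Gb n = - (1 - \<beta>) * g n n + (\<Sum>j<n. g n j * eps (n - 1 - j))"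
      by algebra
    have "\<bar>(1 - \<beta>) * g n n\<bar> \<le> \<bar>1 - \<beta>\<bar>"
      using g[of n n] by (simp add: abs_mult mult_left_le)
    moreover have "\<bar>\<Sum>j<n. g n j * eps (n - 1 - j)\<bar> \<le> \<delta> * (\<Sum>j<n. g n j) + real K * C"
      by (rule abs_sum_weighted_tail_le[OF g C K])
    moreover have "\<delta> * (\<Sum>j<n. g n j) \<le> \<delta> * G n"
      using G_less g[of n n] \<open>0 < \<delta>\<close> by (intro mult_left_mono) auto
    ultimately show ?thesis unfolding eq by linarith
  qed
  then show ?thesis by blast
qed

lemma renewal_tendsto:
  fixes G Gb S :: "nat \<Rightarrow> real" and g :: "nat \<Rightarrow> nat \<Rightarrow> real"
  assumes "0 < \<beta>" and S: "S \<longlonglongrightarrow> 1 - \<beta>"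
    and g: "\<And>n j. 0 \<le> g n j" "\<And>n j. g n j \<le> 1"
    and G: "\<And>n. G n = (\<Sum>j\<le>n. g n j)"
    and renewal: "\<And>n. G n = Gb n + (\<Sum>j<n. g n j * S (n - 1 - j))"
    and Gb: "(\<lambda>n. Gb n / sqrt (real n)) \<longlonglongrightarrow> L"
  shows "(\<lambda>n. G n / sqrt (real n)) \<longlonglongrightarrow> L / \<beta>"
proof (rule tendsto_of_relative_error[OF \<open>0 < \<beta>\<close> _ Gb tendsto_const_div_sqrt[of 1]])
  show "0 \<le> G n / sqrt (real n)" for n unfolding G by (simp add: sum_nonneg g)
  fix \<delta> :: real assume "0 < \<delta>"
  then obtain R where R: "\<And>n. \<bar>\<beta> * G n - Gb n\<bar> \<le> \<delta> * G n + R"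
    using renewal_perturbation_bound[OF S g G renewal] by blast
  have "\<bar>\<beta> * (G n / sqrt (real n)) - Gb n / sqrt (real n)\<bar>
      \<le> \<delta> * (G n / sqrt (real n)) + R * (1 / sqrt (real n))" for n
  proof -
    have "\<bar>\<beta> * (G n / sqrt (real n)) - Gb n / sqrt (real n)\<bar> = \<bar>\<beta> * G n - Gb n\<bar> / sqrt (real n)"
    proof -
      have "\<beta> * (G n / sqrt (real n)) - Gb n / sqrt (real n) = (\<beta> * G n - Gb n) / sqrt (real n)"
        by (simp add: diff_divide_distrib)
      then show ?thesis by (simp add: abs_div)
    qed
    also have "\<dots> \<le> (\<delta> * G n + R) / sqrt (real n)" by (rule divide_right_mono[OF R]) simp
    finally show ?thesis by (simp add: add_divide_distrib)
  qed
  then show "\<exists>R. \<forall>n. \<bar>\<beta> * (G n / sqrt (real n)) - Gb n / sqrt (real n)\<bar>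
      \<le> \<delta> * (G n / sqrt (real n)) + R * (1 / sqrt (real n))" by blast
qed

subsection \<open>Gaussian integrals\<close>

lemma integrable_std_normal_cos: "integrable lborel (\<lambda>u. std_normal_density u * cos (\<theta> * u))"
  by (rule Bochner_Integration.integrable_bound[OF integrable_normal_density[of 1 0]])
     (auto simp: abs_mult intro!: mult_left_le)

lemma integral_std_normal_cos: "(\<integral>u. std_normal_density u * cos (\<theta> * u) \<partial>lborel) = exp (- \<theta>\<^sup>2 / 2)"
proof -
  have int: "integrable lborel (\<lambda>u. std_normal_density u *\<^sub>R iexp (\<theta> * u))"
    by (rule Bochner_Integration.integrable_bound[OF integrable_normal_density[of 1 0]])
       (auto simp: norm_exp_i_times)
  have "char std_normal_distribution \<theta> = (\<integral>u. std_normal_density u *\<^sub>R iexp (\<theta> * u) \<partial>lborel)"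
    unfolding char_def by (rule integral_density) auto
  then have "(\<integral>u. std_normal_density u *\<^sub>R iexp (\<theta> * u) \<partial>lborel) = complex_of_real (exp (- \<theta>\<^sup>2 / 2))"
    using char_std_normal_distribution by simp
  then have "Re (\<integral>u. std_normal_density u *\<^sub>R iexp (\<theta> * u) \<partial>lborel) = exp (- \<theta>\<^sup>2 / 2)"
    by simp
  moreover have "Re (\<integral>u. std_normal_density u *\<^sub>R iexp (\<theta> * u) \<partial>lborel) =
      (\<integral>u. std_normal_density u * cos (\<theta> * u) \<partial>lborel)"
    by (subst integral_bounded_linear[OF bounded_linear_Re int, symmetric]) (simp add: Re_exp)
  ultimately show ?thesis by simp
qed

lemma gaussian_cos_integral:
  fixes b x :: real assumes b: "b > 0"
  shows "integrable lborel (\<lambda>s. exp (- b * s\<^sup>2) * cos (s * x))"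
    and "(\<integral>s. exp (- b * s\<^sup>2) * cos (s * x) \<partial>lborel) = sqrt (pi / b) * exp (- x\<^sup>2 / (4 * b))"
proof -
  define c where "c = sqrt (2 * b)"
  have c: "c > 0" "c\<^sup>2 = 2 * b" using b by (auto simp: c_def)
  define f where "f s = exp (- b * s\<^sup>2) * cos (s * x)" for s
  have eq: "f (0 + (1 / c) * u) = sqrt (2 * pi) * (std_normal_density u * cos ((x / c) * u))" for u
  proof -
    have "- b * (u / c)\<^sup>2 = - u\<^sup>2 / 2" using c b by (simp add: power_divide field_simps)
    then show ?thesis unfolding f_def std_normal_density_def by (simp add: mult_ac)
  qed
  have "integrable lborel (\<lambda>u. f (0 + (1 / c) * u))"
    unfolding eq by (intro integrable_mult_right integrable_std_normal_cos)
  then show "integrable lborel (\<lambda>s. exp (- b * s\<^sup>2) * cos (s * x))"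
    using lborel_integrable_real_affine_iff[of "1 / c" f 0] c by (simp add: f_def[abs_def])
  have "(\<integral>s. f s \<partial>lborel) = \<bar>1 / c\<bar> *\<^sub>R (\<integral>u. f (0 + (1 / c) * u) \<partial>lborel)"
    by (rule lborel_integral_real_affine) (use c in auto)
  also have "\<dots> = (1 / c) * (sqrt (2 * pi) * exp (- (x / c)\<^sup>2 / 2))"
    using c by (simp only: eq integral_mult_right_zero integral_std_normal_cos) simp
  also have "\<dots> = sqrt (pi / b) * exp (- x\<^sup>2 / (4 * b))"
  proof -
    have "- (x / c)\<^sup>2 / 2 = - x\<^sup>2 / (4 * b)" using c by (simp add: power_divide)
    moreover have "1 / c * sqrt (2 * pi) = sqrt (pi / b)"
      using b by (simp add: c_def real_sqrt_divide[symmetric] real_sqrt_mult field_simps)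
    ultimately show ?thesis by (metis (no_types, lifting) mult.assoc)
  qed
  finally show "(\<integral>s. exp (- b * s\<^sup>2) * cos (s * x) \<partial>lborel) = sqrt (pi / b) * exp (- x\<^sup>2 / (4 * b))"
    by (simp add: f_def)
qed

lemma integrable_inverse_one_plus_square_lborel: "integrable lborel (\<lambda>s::real. inverse (1 + s\<^sup>2))"
proof -
  have "einterval (-\<infinity>) \<infinity> = (UNIV :: real set)" by (auto simp: einterval_def)
  then show ?thesis using integrable_inverse_1_plus_square by (simp add: set_integrable_def)
qed

lemma integrable_inverse_sqrt_01: "integrable lborel (\<lambda>w::real. indicator {0..1} w * (1 / sqrt w))"
proof -
  have "((\<lambda>w. 1 / sqrt w) has_integral (2 * sqrt 1 - 2 * sqrt 0)) {0..1::real}"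
  proof (rule fundamental_theorem_of_calculus_interior)
    show "continuous_on {0..1} (\<lambda>w::real. 2 * sqrt w)" by (intro continuous_intros)
    fix w :: real assume "w \<in> {0<..<1}"
    then show "((\<lambda>w. 2 * sqrt w) has_vector_derivative 1 / sqrt w) (at w)"
      unfolding has_real_derivative_iff_has_vector_derivative[symmetric]
      by (auto intro!: derivative_eq_intros simp: field_simps)
  qed simp
  then have "(\<lambda>w. 1 / sqrt w) absolutely_integrable_on {0..1::real}"
    by (intro nonnegative_absolutely_integrable_1) auto
  then have "integrable lebesgue (\<lambda>w::real. indicator {0..1} w *\<^sub>R (1 / sqrt w))"
    by (simp add: set_integrable_def)
  then show ?thesis by (subst (asm) integrable_completion) auto
qed

lemma integral_exp_01:
  fixes b :: real assumes "b \<ge> 0"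
  shows "(\<integral>w. indicator {0..1} w * exp (- b * w) \<partial>lborel) = (if b = 0 then 1 else (1 - exp (- b)) / b)"
proof -
  have "continuous_on {0..1::real} (\<lambda>w. exp (- b * w))" by (intro continuous_intros)
  from set_borel_integral_eq_integral(2)[OF borel_integrable_atLeastAtMost'[OF this]]
  have "(\<integral>w. indicator {0..1} w * exp (- b * w) \<partial>lborel) = integral {0..1} (\<lambda>w. exp (- b * w))"
    by (simp add: set_lebesgue_integral_def)
  also have "\<dots> = (if b = 0 then 1 else (1 - exp (- b)) / b)"
  proof (cases "b = 0")
    case False
    have "((\<lambda>w. exp (- b * w)) has_integral ((- exp (- b * 1) / b) - (- exp (- b * 0) / b))) {0..1}"
    proof (rule fundamental_theorem_of_calculus)
      fix w :: real
      show "((\<lambda>w. - exp (- b * w) / b) has_vector_derivative exp (- b * w)) (at w within {0..1})"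
        unfolding has_real_derivative_iff_has_vector_derivative[symmetric]
        using False by (auto intro!: derivative_eq_intros simp: field_simps)
    qed simp
    then show ?thesis using False by (simp add: integral_unique field_simps)
  qed simp
  finally show ?thesis .
qed

definition green_profile :: "real \<Rightarrow> real \<Rightarrow> real" where
  "green_profile a s = (if s = 0 then 1 else (1 - exp (- a * s\<^sup>2)) / (a * s\<^sup>2))"

lemma borel_measurable_green_profile_cos [measurable]:
  "(\<lambda>s. green_profile a s * cos (s * x)) \<in> borel_measurable borel"
  unfolding green_profile_def by measurable

definition gaussian_mixture_kernel :: "real \<Rightarrow> real \<Rightarrow> real \<Rightarrow> real \<Rightarrow> real" where
  "gaussian_mixture_kernel a x w s = indicator {0..1} w * (exp (- (a * w) * s\<^sup>2) * cos (s * x))"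

lemma integrable_gaussian_mixture_kernel_slice:
  assumes "0 < a" "w \<noteq> 0"
  shows "integrable lborel (\<lambda>s. gaussian_mixture_kernel a x w s)"
proof (cases "w \<in> {0..1}")
  case True
  then show ?thesis using gaussian_cos_integral(1)[of "a * w" x] assms
    by (simp add: gaussian_mixture_kernel_def)
qed (simp add: gaussian_mixture_kernel_def)

lemma integral_gaussian_mixture_kernel_slice:
  assumes "0 < a" "w \<noteq> 0"
  shows "(\<integral>s. gaussian_mixture_kernel a x w s \<partial>lborel)
      = indicator {0..1} w * (sqrt (pi / (a * w)) * exp (- x\<^sup>2 / (4 * (a * w))))"
proof (cases "w \<in> {0..1}")
  case True
  then show ?thesis using gaussian_cos_integral(2)[of "a * w" x] assms
    by (simp add: gaussian_mixture_kernel_def)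
qed (simp add: gaussian_mixture_kernel_def)

lemma integrable_gaussian_mixture_kernel:
  assumes a: "0 < a"
  shows "integrable (lborel \<Otimes>\<^sub>M lborel) (\<lambda>(w, s). gaussian_mixture_kernel a x w s)"
proof (rule lborel_pair.Fubini_integrable)
  show "(\<lambda>(w, s). gaussian_mixture_kernel a x w s) \<in> borel_measurable (lborel \<Otimes>\<^sub>M lborel)"
    unfolding gaussian_mixture_kernel_def by measurable
  show "AE w in lborel. integrable lborel (\<lambda>s. case (w, s) of (w, s) \<Rightarrow> gaussian_mixture_kernel a x w s)"
    using AE_lborel_singleton[of 0] by eventually_elim (simp add: integrable_gaussian_mixture_kernel_slice a)
  have bound: "norm (\<integral>s. norm (gaussian_mixture_kernel a x w s) \<partial>lborel)
      \<le> norm (sqrt (pi / a) * (indicator {0..1} w * (1 / sqrt w)))" if "w \<noteq> 0" for w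
  proof (cases "w \<in> {0..1}")
    case True
    then have w: "w > 0" using that by auto
    have gauss: "integrable lborel (\<lambda>s. exp (- (a * w) * s\<^sup>2))"
      "(\<integral>s. exp (- (a * w) * s\<^sup>2) \<partial>lborel) = sqrt (pi / (a * w))"
      using gaussian_cos_integral[of "a * w" 0] w a by simp_all
    have "(\<integral>s. norm (gaussian_mixture_kernel a x w s) \<partial>lborel) \<le> (\<integral>s. exp (- (a * w) * s\<^sup>2) \<partial>lborel)"
      by (rule integral_mono'[OF gauss(1)])
         (use True in \<open>auto simp: gaussian_mixture_kernel_def abs_mult mult_left_le\<close>)
    also have "\<dots> = sqrt (pi / a) * (1 / sqrt w)"
      using gauss(2) w a by (simp add: real_sqrt_divide real_sqrt_mult)
    finally show ?thesis using True w a by (simp add: integral_nonneg)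
  qed (simp add: gaussian_mixture_kernel_def)
  show "integrable lborel (\<lambda>w. \<integral>s. norm (case (w, s) of (w, s) \<Rightarrow> gaussian_mixture_kernel a x w s) \<partial>lborel)"
  proof (rule Bochner_Integration.integrable_bound[OF integrable_mult_right[OF integrable_inverse_sqrt_01]])
    show "(\<lambda>w. \<integral>s. norm (case (w, s) of (w, s) \<Rightarrow> gaussian_mixture_kernel a x w s) \<partial>lborel)
        \<in> borel_measurable lborel"
      unfolding gaussian_mixture_kernel_def by measurable
    show "AE w in lborel. norm (\<integral>s. norm (case (w, s) of (w, s) \<Rightarrow> gaussian_mixture_kernel a x w s) \<partial>lborel)
        \<le> norm (sqrt (pi / a) * (indicator {0..1} w * (1 / sqrt w)))"
      using AE_lborel_singleton[of 0] by eventually_elim (simp only: prod.case, erule bound)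
  qed
qed

lemma gaussian_mixture_integral:
  fixes a x :: real assumes a: "0 < a"
  shows "(\<integral>s. green_profile a s * cos (s * x) \<partial>lborel)
    = integral {0..1} (\<lambda>w. sqrt (pi / (a * w)) * exp (- x\<^sup>2 / (4 * (a * w))))"
    (is "_ = integral {0..1} ?G")
proof -
  note int = integrable_gaussian_mixture_kernel[OF a, of x]
  have inner_w: "(\<integral>w. gaussian_mixture_kernel a x w s \<partial>lborel) = green_profile a s * cos (s * x)" for s
  proof -
    have "(\<integral>w. gaussian_mixture_kernel a x w s \<partial>lborel)
        = (\<integral>w. indicator {0..1} w * exp (- (a * s\<^sup>2) * w) \<partial>lborel) * cos (s * x)"
      unfolding gaussian_mixture_kernel_def by (simp add: mult_ac)
    moreover have "(\<integral>w. indicator {0..1} w * exp (- (a * s\<^sup>2) * w) \<partial>lborel) = green_profile a s"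
      using integral_exp_01[of "a * s\<^sup>2"] a by (simp add: green_profile_def)
    ultimately show ?thesis by simp
  qed
  have inner_s: "AE w in lborel. (\<integral>s. gaussian_mixture_kernel a x w s \<partial>lborel) = indicator {0..1} w * ?G w"
    using AE_lborel_singleton[of 0] by eventually_elim (simp add: integral_gaussian_mixture_kernel_slice a)
  have "integrable lborel (\<lambda>w. indicator {0..1} w * ?G w)"
    using integrable_cong_AE[OF _ _ inner_s] lborel_pair.integrable_fst'[OF int] by simp
  then have "set_integrable lborel {0..1} ?G" by (simp add: set_integrable_def)
  from set_borel_integral_eq_integral(2)[OF this]
  have "integral {0..1} ?G = (\<integral>w. indicator {0..1} w * ?G w \<partial>lborel)"
    by (simp add: set_lebesgue_integral_def)
  also have "\<dots> = (\<integral>w. (\<integral>s. gaussian_mixture_kernel a x w s \<partial>lborel) \<partial>lborel)"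
    by (rule integral_cong_AE[OF _ _ inner_s, symmetric]) (auto intro: borel_measurable_integrable simp: gaussian_mixture_kernel_def)
  also have "\<dots> = (\<integral>s. (\<integral>w. gaussian_mixture_kernel a x w s \<partial>lborel) \<partial>lborel)"
    using lborel_pair.Fubini_integral[OF int] by simp
  finally show ?thesis by (simp add: inner_w)
qed

lemma integral_gaussian_densities_rescale:
  fixes a x :: real assumes a: "0 < a"
  shows "integral {0..2 * a} (\<lambda>v. 1 / sqrt (2 * pi * v) * exp (- x\<^sup>2 / (2 * v)))
    = a / pi * integral {0..1} (\<lambda>w. sqrt (pi / (a * w)) * exp (- x\<^sup>2 / (4 * (a * w))))"
proof -
  define F where "F v = 1 / sqrt (2 * pi * v) * exp (- x\<^sup>2 / (2 * v))" for v
  define G where "G w = sqrt (pi / (a * w)) * exp (- x\<^sup>2 / (4 * (a * w)))" for w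
  have "(\<lambda>v. v / (2 * a)) ` {0..2 * a} = (*) (1 / (2 * a)) ` {0..2 * a}" by (rule image_cong) auto
  also have "\<dots> = {0..1}" using a by (subst image_mult_atLeastAtMost) auto
  finally have "integral {0..1} (\<lambda>w. F (2 * a * w)) = (1 / \<bar>2 * a\<bar>) *\<^sub>R integral {0..2 * a} F"
    using integral_stretch_real[where m = "2 * a" and f = F and a = 0 and b = "2 * a"] a by simp
  then have stretch: "integral {0..2 * a} F = 2 * a * integral {0..1} (\<lambda>w. F (2 * a * w))"
    using a by simp
  have "F (2 * a * w) = G w / (2 * pi)" if "w \<in> {0..1}" for w
  proof (cases "w = 0")
    case False
    then have w: "w > 0" using that by auto
    have "2 * pi * (2 * a * w) = 2\<^sup>2 * (pi * (a * w))" by (simp add: power2_eq_square mult_ac)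
    then have "sqrt (2 * pi * (2 * a * w)) = 2 * sqrt pi * sqrt (a * w)"
      by (simp add: real_sqrt_mult mult_ac)
    moreover have "sqrt pi * sqrt pi = pi" by simp
    ultimately have "1 / sqrt (2 * pi * (2 * a * w)) = sqrt (pi / (a * w)) / (2 * pi)"
      using a w by (simp add: real_sqrt_divide field_simps)
    moreover have "- x\<^sup>2 / (2 * (2 * a * w)) = - x\<^sup>2 / (4 * (a * w))" by simp
    ultimately show ?thesis unfolding F_def G_def by simp
  qed (simp add: F_def G_def)
  then have "integral {0..1} (\<lambda>w. F (2 * a * w)) = integral {0..1} (\<lambda>w. G w / (2 * pi))"
    by (rule integral_cong)
  also have "\<dots> = integral {0..1} G / (2 * pi)" by simp
  finally have "integral {0..1} (\<lambda>w. F (2 * a * w)) = integral {0..1} G / (2 * pi)" .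
  then show ?thesis unfolding stretch F_def[symmetric] G_def[symmetric] by simp
qed

locale site_law =
  fixes M :: nat and \<mu> :: "(int \<Rightarrow> real) measure"
  assumes law: "env_law M \<mu>"
begin

sublocale prob_space \<mu>
  using law by (simp add: env_law_def)

lemma borel_measurable_eval [measurable]: "(\<lambda>u. u j) \<in> borel_measurable \<mu>"
proof -
  have sets_eq: "sets \<mu> = sets borel" using law by (simp add: env_law_def)
  show ?thesis
    using measurable_product_coordinates[of j] unfolding measurable_cong_sets[OF sets_eq refl] .
qed

definition steps :: "int set" where "steps = {-int M..int M}"
definition diff_steps :: "int set" where "diff_steps = {-2 * int M..2 * int M}"

lemma finite_steps [simp]: "finite steps" "finite diff_steps"
  by (auto simp: steps_def diff_steps_def)

lemma steps_iff: "z \<in> steps \<longleftrightarrow> \<bar>z\<bar> \<le> int M"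
  by (auto simp: steps_def)

lemma diff_steps_iff: "z \<in> diff_steps \<longleftrightarrow> \<bar>z\<bar> \<le> 2 * int M"
  by (auto simp: diff_steps_def)

lemma AE_nonneg: "AE u in \<mu>. \<forall>y. 0 \<le> u y"
  using law by (auto simp: env_law_def prob_vector_def elim: AE_mp)

lemma AE_vanish: "AE u in \<mu>. \<forall>y. y \<notin> steps \<longrightarrow> u y = 0"
  using law by (auto simp: env_law_def prob_vector_def steps_iff elim: AE_mp)

lemma AE_sum_eq_1: "AE u in \<mu>. sum u steps = 1"
  using law by (auto simp: env_law_def prob_vector_def steps_def elim: AE_mp)

lemma AE_le_1: "AE u in \<mu>. \<forall>y. u y \<le> 1"
  using AE_nonneg AE_vanish AE_sum_eq_1
proof eventually_elim
  case (elim u)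
  have "u y \<le> 1" for y
  proof (cases "y \<in> steps")
    case True
    then have "u y \<le> sum u steps" using elim by (intro member_le_sum) auto
    then show ?thesis using elim by simp
  qed (use elim in auto)
  then show ?case by blast
qed

lemma integrable_eval: "integrable \<mu> (\<lambda>u. u j)"
  by (rule integrable_const_bound[where B=1]) (use AE_nonneg AE_le_1 in \<open>auto\<close>)

lemma integrable_eval_mult: "integrable \<mu> (\<lambda>u. u a * u b)"
proof (rule integrable_const_bound[where B=1])
  show "AE u in \<mu>. norm (u a * u b) \<le> 1"
    using AE_nonneg AE_le_1 by eventually_elim (simp add: abs_mult mult_le_one)
qed simp

abbreviation p :: "int \<Rightarrow> real" where "p \<equiv> pker \<mu>"

lemma p_nonneg: "0 \<le> p j"
  unfolding pker_def by (rule integral_nonneg_AE) (use AE_nonneg in auto)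

lemma p_vanish: "j \<notin> steps \<Longrightarrow> p j = 0"
  unfolding pker_def by (rule integral_eq_zero_AE) (use AE_vanish in auto)

lemma sum_p: "sum p steps = 1"
proof -
  have "sum p steps = (\<integral>u. sum u steps \<partial>\<mu>)"
    unfolding pker_def by (rule Bochner_Integration.integral_sum[symmetric]) (rule integrable_eval)
  also have "\<dots> = (\<integral>u. 1 \<partial>\<mu>)"
    by (rule integral_cong_AE) (use AE_sum_eq_1 in auto)
  finally show ?thesis using prob_space by simp
qed

definition pair_mean :: "int \<Rightarrow> int \<Rightarrow> real" where
  "pair_mean a b = (\<integral>u. u a * u b \<partial>\<mu>)"

lemma pair_mean_nonneg: "0 \<le> pair_mean a b"
  unfolding pair_mean_def by (rule integral_nonneg_AE) (use AE_nonneg in auto)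

lemma pair_mean_vanish: "a \<notin> steps \<or> b \<notin> steps \<Longrightarrow> pair_mean a b = 0"
  unfolding pair_mean_def by (rule integral_eq_zero_AE) (use AE_vanish in auto)

lemma sum_pair_mean: "(\<Sum>b\<in>steps. pair_mean a b) = p a"
proof -
  have "(\<Sum>b\<in>steps. pair_mean a b) = (\<integral>u. (\<Sum>b\<in>steps. u a * u b) \<partial>\<mu>)"
    unfolding pair_mean_def
    by (rule Bochner_Integration.integral_sum[symmetric]) (rule integrable_eval_mult)
  also have "\<dots> = (\<integral>u. u a \<partial>\<mu>)"
    by (rule integral_cong_AE) (use AE_sum_eq_1 in \<open>auto simp: sum_distrib_left[symmetric]\<close>)
  finally show ?thesis by (simp add: pker_def)
qed

lemma sum_diff_steps_shift:
  fixes f :: "int \<Rightarrow> real"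
  assumes "z \<in> steps" "\<And>b. b \<notin> steps \<Longrightarrow> f b = 0"
  shows "(\<Sum>y\<in>diff_steps. f (z + y)) = sum f steps"
proof -
  have "(\<Sum>y\<in>diff_steps. f (z + y)) = sum f ((+) z ` diff_steps)"
    by (simp add: sum.reindex inj_on_def)
  also have "\<dots> = sum f steps"
  proof (rule sum.mono_neutral_cong)
    show "f x = 0" if "x \<in> (+) z ` diff_steps - steps" for x using that assms(2) by blast
    show "f x = 0" if "x \<in> steps - (+) z ` diff_steps" for x
    proof -
      have "x - z \<in> diff_steps" using that assms(1) by (auto simp: steps_iff diff_steps_iff)
      then show ?thesis using that by (metis DiffE add_diff_cancel_left' add_diff_eq image_eqI)
    qed
  qed auto
  finally show ?thesis .
qed

definition qbar :: "int \<Rightarrow> real" where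
  "qbar y = (\<Sum>z\<in>steps. p z * p (z + y))"

definition qdefect :: "int \<Rightarrow> real" where
  "qdefect y = qker \<mu> 0 y - qbar y"

lemma qker_origin_eq: "qker \<mu> 0 y = (\<Sum>z\<in>steps. pair_mean z (z + y))"
  unfolding qker_def pair_mean_def by (simp add: infsum_UNIV_eq_sum pair_mean_vanish[unfolded pair_mean_def])

lemma qker_eq_qbar: "qker \<mu> w y = qbar (y - w) + (if w = 0 then qdefect y else 0)"
proof (cases "w = 0")
  case False
  then have "qker \<mu> w y = (\<Sum>z\<in>steps. p z * p (z + y - w))"
    unfolding qker_def by (simp add: infsum_UNIV_eq_sum p_vanish)
  then show ?thesis using False by (simp add: qbar_def algebra_simps)
qed (simp add: qdefect_def)

lemma qker_origin_nonneg: "0 \<le> qker \<mu> 0 y"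
  unfolding qker_origin_eq by (intro sum_nonneg pair_mean_nonneg)

lemma qbar_nonneg: "0 \<le> qbar y"
  unfolding qbar_def by (intro sum_nonneg mult_nonneg_nonneg p_nonneg)

lemma qker_nonneg: "0 \<le> qker \<mu> w y"
proof (cases "w = 0")
  case True then show ?thesis by (simp add: qker_origin_nonneg)
next
  case False then show ?thesis by (simp add: qker_eq_qbar qbar_nonneg)
qed

lemma qbar_vanish: "y \<notin> diff_steps \<Longrightarrow> qbar y = 0"
  unfolding qbar_def by (intro sum.neutral ballI) (auto simp: steps_iff diff_steps_iff intro!: p_vanish)

lemma qdefect_vanish: "y \<notin> diff_steps \<Longrightarrow> qdefect y = 0"
  unfolding qdefect_def qker_origin_eq
  by (auto simp: qbar_vanish steps_iff diff_steps_iff intro!: sum.neutral pair_mean_vanish)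

lemma qker_vanish: "\<bar>y - w\<bar> > 2 * int M \<Longrightarrow> qker \<mu> w y = 0"
  by (auto simp: qker_eq_qbar qbar_vanish qdefect_vanish diff_steps_iff)

lemma sum_qker_origin: "sum (qker \<mu> 0) diff_steps = 1"
proof -
  have "sum (qker \<mu> 0) diff_steps = (\<Sum>z\<in>steps. \<Sum>y\<in>diff_steps. pair_mean z (z + y))"
    unfolding qker_origin_eq by (rule sum.swap)
  also have "\<dots> = (\<Sum>z\<in>steps. \<Sum>b\<in>steps. pair_mean z b)"
    by (intro sum.cong refl sum_diff_steps_shift) (auto intro: pair_mean_vanish)
  finally show ?thesis by (simp add: sum_pair_mean sum_p)
qed

lemma sum_qbar: "sum qbar diff_steps = 1"
proof -
  have "sum qbar diff_steps = (\<Sum>z\<in>steps. p z * (\<Sum>y\<in>diff_steps. p (z + y)))"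
    unfolding qbar_def sum_distrib_left by (rule sum.swap)
  also have "\<dots> = (\<Sum>z\<in>steps. p z * (\<Sum>b\<in>steps. p b))"
    by (intro sum.cong refl arg_cong2[where f="(*)"] sum_diff_steps_shift) (auto intro: p_vanish)
  finally show ?thesis by (simp add: sum_p flip: sum_distrib_right)
qed

lemma sum_qdefect: "sum qdefect diff_steps = 0"
  by (simp add: qdefect_def sum_subtractf sum_qker_origin sum_qbar)

lemma qbar_eq_infsum: "qbar y = (\<Sum>\<^sub>\<infinity>z\<in>(UNIV::int set). p z * p (z + y))"
  unfolding qbar_def by (rule infsum_UNIV_eq_sum[symmetric]) (auto simp: p_vanish)

lemma qbar_uminus: "qbar (- y) = qbar y"
proof -
  have bij: "bij_betw (\<lambda>w::int. w + y) UNIV UNIV" by (rule bij_betwI[where g="\<lambda>w. w - y"]) auto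
  have "qbar (- y) = (\<Sum>\<^sub>\<infinity>w\<in>(UNIV::int set). p (w + y) * p (w + y + - y))"
    unfolding qbar_eq_infsum by (rule infsum_reindex_bij_betw[OF bij, symmetric])
  also have "\<dots> = qbar y" unfolding qbar_eq_infsum by (simp add: mult.commute)
  finally show ?thesis .
qed

lemma measurable_lam_integrand:
  "(\<lambda>u. (cmod (\<Sum>\<^sub>\<infinity>x\<in>(UNIV::int set). complex_of_real (u x) * cis (t * of_int x)))\<^sup>2)
    \<in> borel_measurable \<mu>"
proof -
  have "(\<lambda>u. \<Sum>\<^sub>\<infinity>x\<in>(UNIV::int set). complex_of_real (u x) * cis (t * of_int x)) \<in> borel_measurable \<mu>"
    by (rule borel_measurable_infsum_int) measurable
  then show ?thesis by measurable
qed

lemma lam_bar_eq_cos_sum: "lam_bar \<mu> t = (\<Sum>y\<in>diff_steps. qbar y * cos (t * of_int y))"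
proof -
  have "lam_bar \<mu> t = (\<Sum>x\<in>steps. \<Sum>w\<in>steps. p x * p w * cos (t * of_int (x - w)))"
    unfolding lam_bar_def by (subst infsum_UNIV_eq_sum[where S=steps]) (auto simp: p_vanish cmod_sum_cis_squared)
  also have "\<dots> = (\<Sum>w\<in>steps. p w * (\<Sum>x\<in>steps. p x * cos (t * of_int (x - w))))"
    by (subst sum.swap) (simp add: sum_distrib_left algebra_simps)
  also have "\<dots> = (\<Sum>w\<in>steps. p w * (\<Sum>y\<in>diff_steps. p (w + y) * cos (t * of_int y)))"
  proof (rule sum.cong[OF refl])
    fix w assume "w \<in> steps"
    then have "(\<Sum>x\<in>steps. p x * cos (t * of_int (x - w)))
        = (\<Sum>y\<in>diff_steps. p (w + y) * cos (t * of_int y))"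
      using sum_diff_steps_shift[where f="\<lambda>b. p b * cos (t * of_int (b - w))", symmetric]
      by (auto simp: p_vanish)
    then show "p w * (\<Sum>x\<in>steps. p x * cos (t * of_int (x - w)))
        = p w * (\<Sum>y\<in>diff_steps. p (w + y) * cos (t * of_int y))" by simp
  qed
  also have "\<dots> = (\<Sum>y\<in>diff_steps. qbar y * cos (t * of_int y))"
    unfolding qbar_def by (simp add: sum_distrib_left sum_distrib_right algebra_simps sum.swap[of _ steps])
  finally show ?thesis .
qed

lemma lam_eq_cos_sum: "lam \<mu> t = (\<Sum>y\<in>diff_steps. qker \<mu> 0 y * cos (t * of_int y))"
proof -
  have "lam \<mu> t = (\<integral>u. (\<Sum>x\<in>steps. \<Sum>w\<in>steps. u x * u w * cos (t * of_int (x - w))) \<partial>\<mu>)"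
    unfolding lam_def
  proof (rule integral_cong_AE)
    show "AE u in \<mu>. (cmod (\<Sum>\<^sub>\<infinity>x\<in>(UNIV::int set). complex_of_real (u x) * cis (t * of_int x)))\<^sup>2
        = (\<Sum>x\<in>steps. \<Sum>w\<in>steps. u x * u w * cos (t * of_int (x - w)))"
      using AE_vanish
      by eventually_elim (subst infsum_UNIV_eq_sum[where S=steps], auto simp: cmod_sum_cis_squared)
  qed (use measurable_lam_integrand in auto)
  also have "\<dots> = (\<Sum>w\<in>steps. \<Sum>x\<in>steps. pair_mean x w * cos (t * of_int (x - w)))"
    unfolding pair_mean_def
    by (subst sum.swap) (simp add: Bochner_Integration.integral_sum integrable_eval_mult integrable_sum)
  also have "\<dots> = (\<Sum>w\<in>steps. \<Sum>y\<in>diff_steps. pair_mean w (w + y) * cos (t * of_int y))"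
  proof (rule sum.cong[OF refl])
    fix w assume "w \<in> steps"
    then have "(\<Sum>x\<in>steps. pair_mean x w * cos (t * of_int (x - w)))
        = (\<Sum>y\<in>diff_steps. pair_mean (w + y) w * cos (t * of_int (w + y - w)))"
      by (intro sum_diff_steps_shift[symmetric]) (auto intro: pair_mean_vanish)
    then show "(\<Sum>x\<in>steps. pair_mean x w * cos (t * of_int (x - w)))
        = (\<Sum>y\<in>diff_steps. pair_mean w (w + y) * cos (t * of_int y))"
      by (simp add: pair_mean_def mult.commute)
  qed
  also have "\<dots> = (\<Sum>y\<in>diff_steps. qker \<mu> 0 y * cos (t * of_int y))"
    unfolding qker_origin_eq by (simp add: sum_distrib_right sum.swap[of _ steps])
  finally show ?thesis .
qed

lemma continuous_on_lam_bar [continuous_intros]: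
  assumes "continuous_on A f" shows "continuous_on A (\<lambda>x. lam_bar \<mu> (f x))"
proof -
  have "continuous_on UNIV (lam_bar \<mu>)"
    unfolding lam_bar_eq_cos_sum[abs_def] by (intro continuous_intros)
  then show ?thesis by (rule continuous_on_compose2[OF _ assms]) simp
qed

lemma continuous_on_lam [continuous_intros]:
  assumes "continuous_on A f" shows "continuous_on A (\<lambda>x. lam \<mu> (f x))"
proof -
  have "continuous_on UNIV (lam \<mu>)"
    unfolding lam_eq_cos_sum[abs_def] by (intro continuous_intros)
  then show ?thesis by (rule continuous_on_compose2[OF _ assms]) simp
qed

lemma lam_bar_nonneg: "0 \<le> lam_bar \<mu> t"
  unfolding lam_bar_def by simp

lemma lam_bar_le_1: "lam_bar \<mu> t \<le> 1"
proof -
  have "lam_bar \<mu> t \<le> (\<Sum>y\<in>diff_steps. qbar y * 1)"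
    unfolding lam_bar_eq_cos_sum by (intro sum_mono mult_left_mono) (auto simp: qbar_nonneg)
  then show ?thesis by (simp add: sum_qbar)
qed

lemma lam_le_1: "lam \<mu> t \<le> 1"
proof -
  have "lam \<mu> t \<le> (\<Sum>y\<in>diff_steps. qker \<mu> 0 y * 1)"
    unfolding lam_eq_cos_sum by (intro sum_mono mult_left_mono) (auto simp: qker_nonneg)
  then show ?thesis by (simp add: sum_qker_origin)
qed

lemma lam_bar_0 [simp]: "lam_bar \<mu> 0 = 1"
  by (simp add: lam_bar_eq_cos_sum sum_qbar)

lemma lam_0 [simp]: "lam \<mu> 0 = 1"
  by (simp add: lam_eq_cos_sum sum_qker_origin)

lemma one_minus_lam_bar: "1 - lam_bar \<mu> t = (\<Sum>y\<in>diff_steps. qbar y * (1 - cos (t * of_int y)))"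
  by (simp add: lam_bar_eq_cos_sum sum_qbar right_diff_distrib sum_subtractf)

lemma lam_minus_lam_bar: "lam \<mu> t - lam_bar \<mu> t = - (\<Sum>y\<in>diff_steps. qdefect y * (1 - cos (t * of_int y)))"
  by (simp add: lam_eq_cos_sum lam_bar_eq_cos_sum qdefect_def sum_qdefect[unfolded qdefect_def]
      right_diff_distrib left_diff_distrib sum_subtractf sum_qker_origin sum_qbar)

lemma sum_sin_qbar: "(\<Sum>y\<in>diff_steps. qbar y * sin (t * of_int y)) = 0"
proof -
  have "(\<Sum>y\<in>diff_steps. qbar y * sin (t * of_int y)) = (\<Sum>y\<in>diff_steps. qbar (- y) * sin (t * of_int (- y)))"
    by (rule sum.reindex_bij_witness[where i=uminus and j=uminus]) (auto simp: diff_steps_iff)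
  also have "\<dots> = - (\<Sum>y\<in>diff_steps. qbar y * sin (t * of_int y))"
    by (simp add: qbar_uminus sum_negf)
  finally show ?thesis by simp
qed

subsection \<open>The perturbation identity\<close>

definition window :: "int \<Rightarrow> int set" where
  "window z = {z - 2 * int M..z + 2 * int M}"

lemma finite_window [simp]: "finite (window z)"
  by (simp add: window_def)

lemma qbar_convolution_cos:
  "(\<Sum>w\<in>window z. qbar (z - w) * cos (t * of_int (w - y))) = lam_bar \<mu> t * cos (t * of_int (z - y))"
proof -
  define \<theta> where "\<theta> = t * of_int (z - y)"
  have "(\<Sum>w\<in>window z. qbar (z - w) * cos (t * of_int (w - y)))
      = (\<Sum>v\<in>diff_steps. qbar v * cos (\<theta> - t * of_int v))"
    by (rule sum.reindex_bij_witness[where i="\<lambda>v. z - v" and j="\<lambda>w. z - w"])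
       (auto simp: window_def diff_steps_iff algebra_simps \<theta>_def)
  also have "\<dots> = (\<Sum>v\<in>diff_steps. qbar v * cos (t * of_int v) * cos \<theta> + qbar v * sin (t * of_int v) * sin \<theta>)"
    by (intro sum.cong refl) (simp add: cos_diff algebra_simps)
  also have "\<dots> = (\<Sum>v\<in>diff_steps. qbar v * cos (t * of_int v)) * cos \<theta>
      + (\<Sum>v\<in>diff_steps. qbar v * sin (t * of_int v)) * sin \<theta>"
    by (simp add: sum_distrib_right sum.distrib)
  finally show ?thesis by (simp add: lam_bar_eq_cos_sum sum_sin_qbar \<theta>_def)
qed

text \<open>The k-step kernel of qbar, defined by its Fourier representation; qbar_pow_0 and
  qbar_pow_Suc are the Chapman-Kolmogorov recursion.\<close>

definition qbar_pow :: "nat \<Rightarrow> int \<Rightarrow> int \<Rightarrow> real" where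
  "qbar_pow k x z = 1 / (2 * pi) * integral {-pi..pi} (\<lambda>t. lam_bar \<mu> t ^ k * cos (t * of_int (z - x)))"

lemma qbar_pow_0: "qbar_pow 0 x z = (if x = z then 1 else 0)"
  unfolding qbar_pow_def using integral_cos_int_mult[of "z - x"] by auto

lemma qbar_pow_Suc: "qbar_pow (Suc m) y z = (\<Sum>w\<in>window z. qbar_pow m y w * qbar (z - w))"
proof -
  have "(\<Sum>w\<in>window z. qbar_pow m y w * qbar (z - w)) = 1 / (2 * pi) *
      (\<Sum>w\<in>window z. integral {-pi..pi} (\<lambda>t. qbar (z - w) * (lam_bar \<mu> t ^ m * cos (t * of_int (w - y)))))"
    unfolding qbar_pow_def integral_mult_right sum_distrib_left by (simp only: mult_ac)
  also have "\<dots> = 1 / (2 * pi) * integral {-pi..pi}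
      (\<lambda>t. \<Sum>w\<in>window z. qbar (z - w) * (lam_bar \<mu> t ^ m * cos (t * of_int (w - y))))"
    by (subst integral_sum) (auto intro!: integrable_continuous_interval continuous_intros)
  also have "(\<lambda>t. \<Sum>w\<in>window z. qbar (z - w) * (lam_bar \<mu> t ^ m * cos (t * of_int (w - y))))
      = (\<lambda>t. lam_bar \<mu> t ^ Suc m * cos (t * of_int (z - y)))"
  proof
    fix t
    have "(\<Sum>w\<in>window z. qbar (z - w) * (lam_bar \<mu> t ^ m * cos (t * of_int (w - y))))
        = lam_bar \<mu> t ^ m * (\<Sum>w\<in>window z. qbar (z - w) * cos (t * of_int (w - y)))"
      by (simp add: sum_distrib_left mult_ac)
    also have "\<dots> = lam_bar \<mu> t ^ m * (lam_bar \<mu> t * cos (t * of_int (z - y)))"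
      by (simp only: qbar_convolution_cos)
    finally show "(\<Sum>w\<in>window z. qbar (z - w) * (lam_bar \<mu> t ^ m * cos (t * of_int (w - y))))
        = lam_bar \<mu> t ^ Suc m * cos (t * of_int (z - y))"
      by simp
  qed
  also have "1 / (2 * pi) * integral {-pi..pi} \<dots> = qbar_pow (Suc m) y z"
    by (simp add: qbar_pow_def)
  finally show ?thesis ..
qed

definition defect_pow :: "nat \<Rightarrow> int \<Rightarrow> real" where
  "defect_pow m z = (\<Sum>y\<in>diff_steps. qdefect y * qbar_pow m y z)"

lemma defect_pow_0: "defect_pow 0 z = qdefect z"
  by (cases "z \<in> diff_steps") (auto simp: defect_pow_def qbar_pow_0 qdefect_vanish if_distrib cong: if_cong)

lemma defect_pow_Suc: "defect_pow (Suc m) z = (\<Sum>w\<in>window z. defect_pow m w * qbar (z - w))"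
  unfolding defect_pow_def qbar_pow_Suc
  by (simp add: sum_distrib_left sum_distrib_right sum.swap[of _ "window z"] algebra_simps)

lemma qpow_Suc_window: "qpow \<mu> (Suc k) x z = (\<Sum>w\<in>window z. qpow \<mu> k x w * qker \<mu> w z)"
  by (simp, rule infsum_UNIV_eq_sum) (auto simp: window_def qker_vanish)

lemma qpow_perturbation:
  "qpow \<mu> k x z = qbar_pow k x z + (\<Sum>j<k. qpow \<mu> j x 0 * defect_pow (k - 1 - j) z)"
proof (induction k arbitrary: z)
  case 0
  then show ?case by (simp add: qbar_pow_0)
next
  case (Suc k)
  have origin: "(\<Sum>w\<in>window z. if w = 0 then qpow \<mu> k x 0 * qdefect z else 0) = qpow \<mu> k x 0 * qdefect z"
    by (cases "0 \<in> window z") (auto simp: window_def diff_steps_iff qdefect_vanish)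
  have "qpow \<mu> (Suc k) x z = (\<Sum>w\<in>window z. qpow \<mu> k x w * qbar (z - w))
      + (\<Sum>w\<in>window z. if w = 0 then qpow \<mu> k x 0 * qdefect z else 0)"
    unfolding qpow_Suc_window qker_eq_qbar distrib_left sum.distrib
    by (intro arg_cong2[where f="(+)"] refl sum.cong) auto
  also note origin
  also have "(\<Sum>w\<in>window z. qpow \<mu> k x w * qbar (z - w))
      = (\<Sum>w\<in>window z. qbar_pow k x w * qbar (z - w))
        + (\<Sum>j<k. qpow \<mu> j x 0 * (\<Sum>w\<in>window z. defect_pow (k - 1 - j) w * qbar (z - w)))"
    unfolding Suc.IH
    by (simp add: algebra_simps sum.distrib sum_distrib_left sum_distrib_right sum.swap[of _ "window z"])
  also have "\<dots> = qbar_pow (Suc k) x z + (\<Sum>j<k. qpow \<mu> j x 0 * defect_pow (Suc k - 1 - j) z)"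
    unfolding qbar_pow_Suc[symmetric] defect_pow_Suc[symmetric]
    by (intro arg_cong2[where f="(+)"] refl sum.cong) (auto simp: Suc_diff_Suc)
  finally show ?case by (simp add: defect_pow_0 algebra_simps)
qed

definition reach :: "nat \<Rightarrow> int \<Rightarrow> int set" where
  "reach k x = {x - 2 * int M * int k..x + 2 * int M * int k}"

lemma qpow_nonneg: "0 \<le> qpow \<mu> k x z"
proof (induction k arbitrary: z)
  case (Suc k) then show ?case
    unfolding qpow_Suc_window by (intro sum_nonneg mult_nonneg_nonneg qker_nonneg) auto
qed simp

lemma qpow_vanish: "z \<notin> reach k x \<Longrightarrow> qpow \<mu> k x z = 0"
proof (induction k arbitrary: z)
  case (Suc k)
  have "w \<notin> reach k x" if "w \<in> window z" for w
    using that Suc.prems by (auto simp: reach_def window_def algebra_simps)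
  then show ?case unfolding qpow_Suc_window by (simp add: Suc.IH)
qed (simp add: reach_def)

lemma sum_qker_window: "(\<Sum>z\<in>window w. qker \<mu> w z) = 1"
proof -
  have "(\<Sum>z\<in>window w. qbar (z - w)) = sum qbar diff_steps"
    by (rule sum.reindex_bij_witness[where i="\<lambda>v. v + w" and j="\<lambda>z. z - w"])
       (auto simp: window_def diff_steps_iff)
  moreover have "(\<Sum>z\<in>window w. if w = 0 then qdefect z else 0) = 0"
    using sum_qdefect by (cases "w = 0") (simp_all add: window_def diff_steps_def)
  ultimately show ?thesis unfolding qker_eq_qbar sum.distrib by (simp add: sum_qbar)
qed

lemma sum_qpow: "(\<Sum>z\<in>reach k x. qpow \<mu> k x z) = 1"
proof (induction k)
  case (Suc k)
  have "qpow \<mu> (Suc k) x z = (\<Sum>w\<in>reach k x. qpow \<mu> k x w * qker \<mu> w z)" for z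
    unfolding qpow_Suc_window
    by (rule sum.mono_neutral_cong)
       (auto simp: reach_def window_def qpow_vanish qker_vanish)
  then have "(\<Sum>z\<in>reach (Suc k) x. qpow \<mu> (Suc k) x z)
      = (\<Sum>w\<in>reach k x. qpow \<mu> k x w * (\<Sum>z\<in>reach (Suc k) x. qker \<mu> w z))"
    by (simp add: sum_distrib_left sum.swap[of _ "reach (Suc k) x"])
  also have "\<dots> = (\<Sum>w\<in>reach k x. qpow \<mu> k x w)"
  proof (rule sum.cong[OF refl])
    fix w assume w: "w \<in> reach k x"
    have "(\<Sum>z\<in>reach (Suc k) x. qker \<mu> w z) = (\<Sum>z\<in>window w. qker \<mu> w z)"
      by (rule sum.mono_neutral_cong)
         (use w in \<open>auto simp: reach_def window_def algebra_simps intro!: qker_vanish\<close>)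
    then show "qpow \<mu> k x w * (\<Sum>z\<in>reach (Suc k) x. qker \<mu> w z) = qpow \<mu> k x w"
      by (simp add: sum_qker_window)
  qed
  finally show ?case using Suc.IH by simp
qed (simp add: reach_def)

lemma qpow_le_1: "qpow \<mu> k x z \<le> 1"
proof (cases "z \<in> reach k x")
  case True
  then have "qpow \<mu> k x z \<le> (\<Sum>z\<in>reach k x. qpow \<mu> k x z)"
    by (intro member_le_sum qpow_nonneg) (auto simp: reach_def)
  then show ?thesis by (simp add: sum_qpow)
qed (simp add: qpow_vanish)

definition defect_sum :: "nat \<Rightarrow> real" where
  "defect_sum m = (\<Sum>i\<le>m. defect_pow i 0)"

definition free_green :: "nat \<Rightarrow> int \<Rightarrow> real" where
  "free_green n x = (\<Sum>k\<le>n. qbar_pow k x 0)"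

lemma Gn_perturbation:
  "Gn \<mu> n x 0 = free_green n x + (\<Sum>j<n. qpow \<mu> j x 0 * defect_sum (n - 1 - j))"
  unfolding Gn_def free_green_def defect_sum_def
  using sum_convolution_partial_sums[of "\<lambda>j. qpow \<mu> j x 0" "\<lambda>i. defect_pow i 0" n]
  by (subst qpow_perturbation) (simp add: sum.distrib)

lemma sum_qdefect_cos: "(\<Sum>y\<in>diff_steps. qdefect y * cos (t * of_int y)) = lam \<mu> t - lam_bar \<mu> t"
  by (simp add: qdefect_def lam_eq_cos_sum lam_bar_eq_cos_sum left_diff_distrib sum_subtractf)

lemma defect_pow_origin_integral:
  "defect_pow i 0 = 1 / (2 * pi) * integral {-pi..pi} (\<lambda>t. lam_bar \<mu> t ^ i * (lam \<mu> t - lam_bar \<mu> t))"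
proof -
  have "defect_pow i 0 = 1 / (2 * pi) *
      (\<Sum>y\<in>diff_steps. integral {-pi..pi} (\<lambda>t. qdefect y * (lam_bar \<mu> t ^ i * cos (t * of_int y))))"
    unfolding defect_pow_def qbar_pow_def by (simp add: sum_distrib_left algebra_simps)
  also have "\<dots> = 1 / (2 * pi) * integral {-pi..pi}
      (\<lambda>t. \<Sum>y\<in>diff_steps. qdefect y * (lam_bar \<mu> t ^ i * cos (t * of_int y)))"
    by (subst integral_sum) (auto intro!: integrable_continuous_interval continuous_intros)
  also have "(\<lambda>t. \<Sum>y\<in>diff_steps. qdefect y * (lam_bar \<mu> t ^ i * cos (t * of_int y)))
      = (\<lambda>t. lam_bar \<mu> t ^ i * (lam \<mu> t - lam_bar \<mu> t))"
  proof
    fix t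
    have "(\<Sum>y\<in>diff_steps. qdefect y * (lam_bar \<mu> t ^ i * cos (t * of_int y)))
        = lam_bar \<mu> t ^ i * (\<Sum>y\<in>diff_steps. qdefect y * cos (t * of_int y))"
      by (simp add: sum_distrib_left mult_ac)
    also have "\<dots> = lam_bar \<mu> t ^ i * (lam \<mu> t - lam_bar \<mu> t)"
      by (simp only: sum_qdefect_cos)
    finally show "(\<Sum>y\<in>diff_steps. qdefect y * (lam_bar \<mu> t ^ i * cos (t * of_int y)))
        = lam_bar \<mu> t ^ i * (lam \<mu> t - lam_bar \<mu> t)" .
  qed
  finally show ?thesis .
qed

lemma defect_sum_integral:
  "defect_sum m = 1 / (2 * pi) *
    integral {-pi..pi} (\<lambda>t. (lam \<mu> t - lam_bar \<mu> t) * (\<Sum>i\<le>m. lam_bar \<mu> t ^ i))"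
proof -
  have "defect_sum m = 1 / (2 * pi) *
      (\<Sum>i\<le>m. integral {-pi..pi} (\<lambda>t. lam_bar \<mu> t ^ i * (lam \<mu> t - lam_bar \<mu> t)))"
    unfolding defect_sum_def defect_pow_origin_integral by (simp add: sum_distrib_left)
  also have "\<dots> = 1 / (2 * pi) *
      integral {-pi..pi} (\<lambda>t. \<Sum>i\<le>m. lam_bar \<mu> t ^ i * (lam \<mu> t - lam_bar \<mu> t))"
    by (subst integral_sum) (auto intro!: integrable_continuous_interval continuous_intros)
  finally show ?thesis by (simp add: sum_distrib_left sum_distrib_right mult.commute)
qed

lemma free_green_integral:
  "free_green n x = 1 / (2 * pi) *
    integral {-pi..pi} (\<lambda>t. (\<Sum>k\<le>n. lam_bar \<mu> t ^ k) * cos (t * of_int x))"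
proof -
  have "free_green n x = 1 / (2 * pi) *
      integral {-pi..pi} (\<lambda>t. \<Sum>k\<le>n. lam_bar \<mu> t ^ k * cos (t * of_int (0 - x)))"
    unfolding free_green_def qbar_pow_def
    by (subst integral_sum)
       (auto simp: sum_distrib_left intro!: integrable_continuous_interval continuous_intros)
  then show ?thesis by (simp add: sum_distrib_right)
qed

subsection \<open>Aperiodicity and the variance\<close>

lemma support_not_in_lattice:
  assumes "A1 \<mu>" "h > 1"
  shows "\<exists>w. 0 < p w \<and> \<not> h dvd w - z0"
proof (rule ccontr)
  assume "\<not> ?thesis"
  then have dvd: "h dvd w - z0" if "p w \<noteq> 0" for w
    using that p_nonneg[of w] by force
  have inj: "inj (\<lambda>k::int. z0 + k * h)" using assms(2) by (auto simp: inj_def)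
  have "(\<Sum>\<^sub>\<infinity>k\<in>(UNIV::int set). p (z0 + k * h)) = infsum p (range (\<lambda>k. z0 + k * h))"
    using infsum_reindex[OF inj, of p] by (simp add: o_def)
  also have "\<dots> = infsum p UNIV"
  proof (rule infsum_cong_neutral)
    fix w assume "w \<in> UNIV - range (\<lambda>k. z0 + k * h)"
    then have "\<not> h dvd w - z0" by (auto simp: dvd_def algebra_simps)
    then show "p w = 0" using dvd by blast
  qed auto
  also have "\<dots> = 1" using infsum_UNIV_eq_sum[of steps p] p_vanish sum_p by simp
  finally show False using assms unfolding A1_def by blast
qed

lemma ex_p_pos: "\<exists>z. 0 < p z"
  using sum_p p_nonneg by (metis less_eq_real_def sum.neutral zero_neq_one)

lemma qbar_ge_mult:
  assumes "0 < p z"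
  shows "p z * p w \<le> qbar (w - z)"
proof -
  have "z \<in> steps" using assms p_vanish by force
  then have "p z * p (z + (w - z)) \<le> qbar (w - z)"
    unfolding qbar_def by (intro member_le_sum mult_nonneg_nonneg p_nonneg) auto
  then show ?thesis by simp
qed

lemma lam_bar_uminus: "lam_bar \<mu> (- t) = lam_bar \<mu> t"
  by (simp add: lam_bar_eq_cos_sum)

lemma lam_bar_lt_1:
  assumes "A1 \<mu>" and t: "t \<in> {-pi..pi}" "t \<noteq> 0"
  shows "lam_bar \<mu> t < 1"
proof (rule ccontr)
  assume "\<not> lam_bar \<mu> t < 1"
  then have "lam_bar \<mu> \<bar>t\<bar> = 1" using lam_bar_le_1[of t] lam_bar_uminus[of t] by (cases "t \<ge> 0") auto
  then have "(\<Sum>y\<in>diff_steps. qbar y * (1 - cos (\<bar>t\<bar> * of_int y))) = 0"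
    using one_minus_lam_bar[of "\<bar>t\<bar>"] by simp
  then have zero: "\<forall>y\<in>diff_steps. qbar y * (1 - cos (\<bar>t\<bar> * of_int y)) = 0"
    by (subst sum_nonneg_eq_0_iff[symmetric]) (auto intro!: mult_nonneg_nonneg qbar_nonneg)
  obtain z0 where z0: "0 < p z0" using ex_p_pos by blast
  \<comment> \<open>any two points of the support of p differ by a period of t\<close>
  have "cos (\<bar>t\<bar> * of_int (w - z0)) = 1" if "w \<in> {w. 0 < p w}" for w
  proof -
    have "0 < p z0 * p w" using z0 that by simp
    then have "0 < qbar (w - z0)" using qbar_ge_mult[OF z0, of w] by linarith
    moreover then have "w - z0 \<in> diff_steps" using qbar_vanish by force
    ultimately show ?thesis using zero by auto
  qed
  moreover have "0 < \<bar>t\<bar>" "\<bar>t\<bar> \<le> pi" using t by auto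
  ultimately obtain h where "h > 1" "\<And>w. 0 < p w \<Longrightarrow> h dvd w - z0"
    using common_divisor_if_cos_eq_1[of "\<bar>t\<bar>" z0 "{w. 0 < p w}"] z0 by auto
  then show False using support_not_in_lattice[OF \<open>A1 \<mu>\<close> \<open>h > 1\<close>, of z0] by blast
qed

lemma sigma_a2_eq_qbar_moment: "sigma_a2 \<mu> = (\<Sum>y\<in>diff_steps. qbar y * (of_int y)\<^sup>2) / 2"
proof -
  define D where "D w = of_int w - Vel \<mu>" for w :: int
  have "Vel \<mu> = (\<Sum>j\<in>steps. of_int j * p j)"
    unfolding Vel_def by (rule infsum_UNIV_eq_sum) (auto simp: p_vanish)
  then have centered: "(\<Sum>w\<in>steps. p w * D w) = 0"
    by (simp add: D_def right_diff_distrib sum_subtractf sum_p mult.commute flip: sum_distrib_right)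
  have "(\<Sum>y\<in>diff_steps. qbar y * (of_int y)\<^sup>2) = (\<Sum>z\<in>steps. p z * (\<Sum>y\<in>diff_steps. p (z + y) * (of_int y)\<^sup>2))"
    unfolding qbar_def by (simp add: sum_distrib_left sum_distrib_right sum.swap[of _ steps] mult.assoc)
  also have "\<dots> = (\<Sum>z\<in>steps. p z * (\<Sum>w\<in>steps. p w * (D w - D z)\<^sup>2))"
  proof (rule sum.cong[OF refl])
    fix z assume "z \<in> steps"
    then have "(\<Sum>y\<in>diff_steps. p (z + y) * (of_int (z + y - z))\<^sup>2) = (\<Sum>w\<in>steps. p w * (of_int (w - z))\<^sup>2)"
      by (intro sum_diff_steps_shift[where f="\<lambda>w. p w * (of_int (w - z))\<^sup>2"]) (auto simp: p_vanish)
    then show "p z * (\<Sum>y\<in>diff_steps. p (z + y) * (of_int y)\<^sup>2) = p z * (\<Sum>w\<in>steps. p w * (D w - D z)\<^sup>2)"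
      by (simp add: D_def)
  qed
  also have "\<dots> = (\<Sum>z\<in>steps. \<Sum>w\<in>steps. p z * (p w * (D w)\<^sup>2)
      - 2 * ((p z * D z) * (p w * D w)) + (p z * (D z)\<^sup>2) * p w)"
    by (intro sum.cong refl) (simp add: sum_distrib_left power2_eq_square algebra_simps)
  also have "\<dots> = (\<Sum>z\<in>steps. p z) * (\<Sum>w\<in>steps. p w * (D w)\<^sup>2)
      - 2 * ((\<Sum>z\<in>steps. p z * D z) * (\<Sum>w\<in>steps. p w * D w))
      + (\<Sum>z\<in>steps. p z * (D z)\<^sup>2) * (\<Sum>w\<in>steps. p w)"
    by (simp only: sum_product) (simp add: sum.distrib sum_subtractf sum_distrib_left)
  also have "\<dots> = 2 * (\<Sum>w\<in>steps. p w * (D w)\<^sup>2)"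
    by (simp add: sum_p centered)
  also have "(\<Sum>w\<in>steps. p w * (D w)\<^sup>2) = sigma_a2 \<mu>"
    unfolding sigma_a2_def D_def by (subst infsum_UNIV_eq_sum[of steps]) (auto simp: p_vanish mult.commute)
  finally show ?thesis by simp
qed

lemma sigma_a2_pos:
  assumes "A1 \<mu>"
  shows "0 < sigma_a2 \<mu>"
proof -
  obtain z0 where z0: "0 < p z0" using ex_p_pos by blast
  obtain w where w: "0 < p w" "\<not> 2 dvd w - z0"
    using support_not_in_lattice[OF assms, of 2] by auto
  have "0 < p z0 * p w" using z0 w by simp
  then have pos: "0 < qbar (w - z0) * (of_int (w - z0))\<^sup>2"
    using qbar_ge_mult[OF z0, of w] w(2) by (intro mult_pos_pos) (linarith, auto)
  then have "w - z0 \<in> diff_steps" using qbar_vanish by force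
  then have "qbar (w - z0) * (of_int (w - z0))\<^sup>2 \<le> (\<Sum>y\<in>diff_steps. qbar y * (of_int y)\<^sup>2)"
    by (intro member_le_sum mult_nonneg_nonneg qbar_nonneg) auto
  then show ?thesis using pos by (simp add: sigma_a2_eq_qbar_moment)
qed

lemma one_minus_lam_bar_over_square_tendsto:
  "((\<lambda>t. (1 - lam_bar \<mu> t) / t\<^sup>2) \<longlongrightarrow> sigma_a2 \<mu>) (at 0)"
proof -
  have "((\<lambda>t. \<Sum>y\<in>diff_steps. qbar y * ((1 - cos (t * of_int y)) / t\<^sup>2))
      \<longlongrightarrow> (\<Sum>y\<in>diff_steps. qbar y * ((of_int y)\<^sup>2 / 2))) (at 0)"
    by (intro tendsto_sum tendsto_mult_left one_minus_cos_over_square_tendsto)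
  then show ?thesis
    by (simp add: one_minus_lam_bar sigma_a2_eq_qbar_moment sum_divide_distrib)
qed

lemma lam_bar_quadratic_gap:
  assumes "A1 \<mu>"
  shows "\<exists>c>0. \<forall>t\<in>{-pi..pi}. c * t\<^sup>2 \<le> 1 - lam_bar \<mu> t"
  using lam_bar_lt_1[OF assms] sigma_a2_pos[OF assms] one_minus_lam_bar_over_square_tendsto
  by (intro quadratic_lower_bound) (auto intro!: continuous_intros)

lemma lam_minus_lam_bar_bound: "\<exists>C\<ge>0. \<forall>t. \<bar>lam \<mu> t - lam_bar \<mu> t\<bar> \<le> C * t\<^sup>2"
proof (intro exI conjI allI)
  let ?C = "(\<Sum>y\<in>diff_steps. \<bar>qdefect y\<bar> * (of_int y)\<^sup>2) / 2"
  show "0 \<le> ?C" by (intro divide_nonneg_pos sum_nonneg mult_nonneg_nonneg) auto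
  fix t
  have "\<bar>lam \<mu> t - lam_bar \<mu> t\<bar> \<le> (\<Sum>y\<in>diff_steps. \<bar>qdefect y\<bar> * \<bar>1 - cos (t * of_int y)\<bar>)"
    unfolding lam_minus_lam_bar abs_minus_cancel by (rule order_trans[OF sum_abs]) (simp add: abs_mult)
  also have "\<dots> \<le> (\<Sum>y\<in>diff_steps. \<bar>qdefect y\<bar> * ((t * of_int y)\<^sup>2 / 2))"
    using one_minus_cos_le cos_le_one by (intro sum_mono mult_left_mono) (auto simp: abs_le_iff)
  also have "\<dots> = (\<Sum>y\<in>diff_steps. (\<bar>qdefect y\<bar> * (of_int y)\<^sup>2) * (t\<^sup>2 / 2))"
    by (intro sum.cong refl) (simp add: power_mult_distrib)
  also have "\<dots> = (\<Sum>y\<in>diff_steps. \<bar>qdefect y\<bar> * (of_int y)\<^sup>2) * (t\<^sup>2 / 2)"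
    by (rule sum_distrib_right[symmetric])
  also have "\<dots> = ?C * t\<^sup>2" by simp
  finally show "\<bar>lam \<mu> t - lam_bar \<mu> t\<bar> \<le> ?C * t\<^sup>2" .
qed

subsection \<open>The constant beta\<close>

lemma defect_sum_tendsto_integral:
  assumes "A1 \<mu>"
  shows "(\<lambda>t. (lam \<mu> t - lam_bar \<mu> t) / (1 - lam_bar \<mu> t)) integrable_on {-pi..pi}"
    and "defect_sum \<longlonglongrightarrow> 1 / (2 * pi) * integral {-pi..pi} (\<lambda>t. (lam \<mu> t - lam_bar \<mu> t) / (1 - lam_bar \<mu> t))"
proof -
  obtain c where c: "c > 0" "\<And>t. t \<in> {-pi..pi} \<Longrightarrow> c * t\<^sup>2 \<le> 1 - lam_bar \<mu> t"
    using lam_bar_quadratic_gap[OF assms] by blast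
  obtain C where C: "C \<ge> 0" "\<And>t. \<bar>lam \<mu> t - lam_bar \<mu> t\<bar> \<le> C * t\<^sup>2"
    using lam_minus_lam_bar_bound by blast
  define f where "f m t = (lam \<mu> t - lam_bar \<mu> t) * (\<Sum>i\<le>m. lam_bar \<mu> t ^ i)" for m t
  have bound: "norm (f m t) \<le> C / c" if t: "t \<in> {-pi..pi}" for m t
  proof (cases "t = 0")
    case False
    have "norm (f m t) = \<bar>lam \<mu> t - lam_bar \<mu> t\<bar> * (\<Sum>i\<le>m. lam_bar \<mu> t ^ i)"
      unfolding f_def by (simp add: abs_mult sum_nonneg lam_bar_nonneg)
    also have "\<dots> \<le> (C * t\<^sup>2) * (1 / (1 - lam_bar \<mu> t))"
      using lam_bar_lt_1[OF assms t False] C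
      by (intro mult_mono sum_power_le_inverse) (auto intro!: sum_nonneg simp: lam_bar_nonneg)
    also have "\<dots> \<le> (C * t\<^sup>2) * (1 / (c * t\<^sup>2))"
      using c C False lam_bar_lt_1[OF assms t False]
      by (intro mult_left_mono divide_left_mono) (auto intro!: c(2)[OF t])
    also have "\<dots> = C / c" using False c by (simp add: field_simps)
    finally show ?thesis .
  qed (use C c in \<open>simp add: f_def\<close>)
  have limit: "(\<lambda>m. f m t) \<longlonglongrightarrow> (lam \<mu> t - lam_bar \<mu> t) / (1 - lam_bar \<mu> t)"
    if t: "t \<in> {-pi..pi}" for t
  proof (cases "t = 0")
    case False
    have "\<bar>lam_bar \<mu> t\<bar> < 1" using lam_bar_lt_1[OF assms t False] lam_bar_nonneg[of t] by simp
    from tendsto_mult_left[OF sum_power_tendsto[OF this]]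
    show ?thesis by (simp add: f_def)
  qed (simp add: f_def)
  have "f m integrable_on {-pi..pi}" for m
    unfolding f_def by (intro integrable_continuous_interval continuous_intros)
  note dc = dominated_convergence[OF this integrable_const_ivl bound limit]
  then show "(\<lambda>t. (lam \<mu> t - lam_bar \<mu> t) / (1 - lam_bar \<mu> t)) integrable_on {-pi..pi}"
    "defect_sum \<longlonglongrightarrow> 1 / (2 * pi) * integral {-pi..pi} (\<lambda>t. (lam \<mu> t - lam_bar \<mu> t) / (1 - lam_bar \<mu> t))"
    using dc tendsto_mult_left[OF dc(2), of "1 / (2 * pi)"]
    by (auto simp: defect_sum_integral[abs_def] f_def[abs_def])
qed

lemma beta_eq_integral:
  assumes "A1 \<mu>"
  shows "beta \<mu> = 1 - 1 / (2 * pi) * integral {-pi..pi} (\<lambda>t. (lam \<mu> t - lam_bar \<mu> t) / (1 - lam_bar \<mu> t))"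
    and "(\<lambda>t. (1 - lam \<mu> t) / (1 - lam_bar \<mu> t)) integrable_on {-pi..pi}"
proof -
  let ?g = "\<lambda>t. (lam \<mu> t - lam_bar \<mu> t) / (1 - lam_bar \<mu> t)"
  have eq: "(1 - lam \<mu> t) / (1 - lam_bar \<mu> t) = 1 - ?g t" if "t \<in> {-pi..pi} - {0}" for t
  proof -
    have "lam_bar \<mu> t < 1" using lam_bar_lt_1[OF assms] that by auto
    then show ?thesis by (simp add: field_simps)
  qed
  have "(\<lambda>t. 1 - ?g t) integrable_on {-pi..pi}"
    using defect_sum_tendsto_integral(1)[OF assms] by (intro integrable_diff) auto
  then show "(\<lambda>t. (1 - lam \<mu> t) / (1 - lam_bar \<mu> t)) integrable_on {-pi..pi}"
    by (rule integrable_spike[OF _ negligible_sing[of 0]]) (use eq in auto)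
  have "integral {-pi..pi} (\<lambda>t. (1 - lam \<mu> t) / (1 - lam_bar \<mu> t)) = integral {-pi..pi} (\<lambda>t. 1 - ?g t)"
    by (rule integral_spike[OF negligible_sing[of 0]]) (use eq in auto)
  also have "\<dots> = 2 * pi - integral {-pi..pi} ?g"
    using defect_sum_tendsto_integral(1)[OF assms] by (subst integral_diff) auto
  finally show "beta \<mu> = 1 - 1 / (2 * pi) * integral {-pi..pi} ?g"
    unfolding beta_def by (simp add: field_simps)
qed

lemma defect_sum_tendsto:
  assumes "A1 \<mu>"
  shows "defect_sum \<longlonglongrightarrow> 1 - beta \<mu>"
  using defect_sum_tendsto_integral(2)[OF assms] beta_eq_integral(1)[OF assms] by simp

lemma qker_0_0_lt_1:
  assumes "A2 M \<mu>"
  shows "qker \<mu> 0 0 < 1"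
proof -
  define A where "A = {u \<in> space \<mu>. Max ((\<lambda>j. u j) ` steps) < 1}"
  have "measure \<mu> A > 0" using assms by (simp add: A2_def A_def steps_def)
  then have A: "A \<in> sets \<mu>" "emeasure \<mu> A \<noteq> 0"
    using measure_notin_sets by (fastforce simp: emeasure_eq_measure)+
  have "qker \<mu> 0 0 = (\<integral>u. (\<Sum>z\<in>steps. u z * u z) \<partial>\<mu>)"
    unfolding qker_origin_eq pair_mean_def by (simp add: Bochner_Integration.integral_sum integrable_eval_mult)
  also have "\<dots> < (\<integral>u. 1 \<partial>\<mu>)"
  proof (rule integral_less_AE[OF _ _ A(2,1)])
    show "integrable \<mu> (\<lambda>u. \<Sum>z\<in>steps. u z * u z)"
      by (intro Bochner_Integration.integrable_sum integrable_eval_mult)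
    \<comment> \<open>entries summing to 1 have sum of squares at most their maximum, which is below 1 on A\<close>
    show "AE u in \<mu>. u \<in> A \<longrightarrow> (\<Sum>z\<in>steps. u z * u z) \<noteq> 1"
      using AE_nonneg AE_sum_eq_1
    proof eventually_elim
      case (elim u)
      show ?case
      proof
        assume "u \<in> A"
        then have "Max (u ` steps) < 1" by (simp add: A_def)
        then show "(\<Sum>z\<in>steps. u z * u z) \<noteq> 1" using sum_squares_le_Max[of steps u] elim by auto
      qed
    qed
    show "AE u in \<mu>. (\<Sum>z\<in>steps. u z * u z) \<le> 1"
      using AE_nonneg AE_le_1 AE_sum_eq_1
    proof eventually_elim
      case (elim u)
      then have "(\<Sum>z\<in>steps. u z * u z) \<le> (\<Sum>z\<in>steps. u z * 1)"
        by (intro sum_mono mult_left_mono) auto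
      then show ?case using elim by simp
    qed
  qed simp
  finally show ?thesis using prob_space by simp
qed

lemma beta_pos:
  assumes "A1 \<mu>" "A2 M \<mu>"
  shows "0 < beta \<mu>"
proof -
  have "integral {-pi..pi} (lam \<mu>) = (\<Sum>y\<in>diff_steps. qker \<mu> 0 y * integral {-pi..pi} (\<lambda>t. cos (t * of_int y)))"
    unfolding lam_eq_cos_sum[abs_def]
    by (subst integral_sum) (auto intro!: integrable_continuous_interval continuous_intros)
  also have "\<dots> = 2 * pi * qker \<mu> 0 0"
    by (simp add: integral_cos_int_mult if_distrib sum.delta diff_steps_def cong: if_cong)
  finally have I: "integral {-pi..pi} (\<lambda>t. 1 - lam \<mu> t) = 2 * pi * (1 - qker \<mu> 0 0)"
    by (subst integral_diff) (auto intro!: integrable_continuous_interval continuous_intros simp: algebra_simps)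
  have "integral {-pi..pi} (\<lambda>t. 1 - lam \<mu> t) \<le> integral {-pi..pi} (\<lambda>t. (1 - lam \<mu> t) / (1 - lam_bar \<mu> t))"
  proof (rule integral_le[OF _ beta_eq_integral(2)[OF assms(1)]])
    show "(\<lambda>t. 1 - lam \<mu> t) integrable_on {-pi..pi}"
      by (intro integrable_continuous_interval continuous_intros)
    \<comment> \<open>since 0 \<le> 1 - lam and 0 < 1 - lam_bar \<le> 1 for t \<noteq> 0\<close>
    show "1 - lam \<mu> t \<le> (1 - lam \<mu> t) / (1 - lam_bar \<mu> t)" if "t \<in> {-pi..pi}" for t
    proof (cases "t = 0")
      case False
      then show ?thesis using lam_bar_lt_1[OF assms(1) that False] lam_le_1[of t] lam_bar_nonneg[of t]
        by (simp add: le_divide_eq mult_left_le)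
    qed simp
  qed
  moreover have "0 < 2 * pi * (1 - qker \<mu> 0 0)" using qker_0_0_lt_1[OF assms(2)] by simp
  ultimately show ?thesis unfolding beta_def I by simp
qed

subsection \<open>Scaling limit of the unperturbed Green function\<close>

definition geom_lam_bar :: "nat \<Rightarrow> real \<Rightarrow> real" where
  "geom_lam_bar n t = (\<Sum>k\<le>n. lam_bar \<mu> t ^ k)"

definition scaled_integrand :: "nat \<Rightarrow> int \<Rightarrow> real \<Rightarrow> real" where
  "scaled_integrand n x s = indicator {- pi * sqrt (real n)..pi * sqrt (real n)} s *
     (geom_lam_bar n (s / sqrt (real n)) / real n * cos (s * of_int x / sqrt (real n)))"

lemma continuous_on_geom_lam_bar [continuous_intros]:
  assumes "continuous_on A f" shows "continuous_on A (\<lambda>x. geom_lam_bar n (f x))"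
  unfolding geom_lam_bar_def by (intro continuous_intros assms)

lemma borel_measurable_scaled_integrand [measurable]: "scaled_integrand n x \<in> borel_measurable borel"
proof -
  have "continuous_on UNIV (lam_bar \<mu>)" by (intro continuous_intros continuous_on_id)
  then have [measurable]: "lam_bar \<mu> \<in> borel_measurable borel" by (rule borel_measurable_continuous_onI)
  show ?thesis unfolding scaled_integrand_def geom_lam_bar_def by measurable
qed

lemma geom_lam_bar_nonneg: "0 \<le> geom_lam_bar n t"
  unfolding geom_lam_bar_def by (intro sum_nonneg) (simp add: lam_bar_nonneg)

lemma geom_lam_bar_le: "geom_lam_bar n t \<le> real n + 1"
proof -
  have "geom_lam_bar n t \<le> (\<Sum>k\<le>n. 1)" unfolding geom_lam_bar_def
    by (intro sum_mono power_le_one lam_bar_nonneg lam_bar_le_1)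
  then show ?thesis by simp
qed

lemma free_green_scaled:
  assumes "1 \<le> n"
  shows "free_green n x / sqrt (real n) = 1 / (2 * pi) * (\<integral>s. scaled_integrand n x s \<partial>lborel)"
proof -
  define r where "r = sqrt (real n)"
  have r: "0 < r" "r * r = real n" using assms by (auto simp: r_def)
  define f where "f t = geom_lam_bar n t * cos (t * of_int x)" for t
  have "(\<lambda>s. s / (1 / r)) ` {-pi..pi} = (*) r ` {-pi..pi}" by (rule image_cong) auto
  also have "\<dots> = {- pi * r..pi * r}" using r by (subst image_mult_atLeastAtMost) (auto simp: mult.commute)
  finally have stretch: "integral {- pi * r..pi * r} (\<lambda>s. f (s / r)) = r * integral {-pi..pi} f"
    using integral_stretch_real[where m = "1 / r" and f = f and a = "-pi" and b = pi] r by simp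
  have "continuous_on {- pi * r..pi * r} (\<lambda>s. f (s / r) / real n)"
    unfolding f_def by (intro continuous_intros) (use r assms in auto)
  from set_borel_integral_eq_integral(2)[OF borel_integrable_atLeastAtMost'[OF this]]
  have "(\<integral>s. scaled_integrand n x s \<partial>lborel) = integral {- pi * r..pi * r} (\<lambda>s. f (s / r) / real n)"
    by (simp add: set_lebesgue_integral_def scaled_integrand_def f_def r_def mult_ac)
  also have "\<dots> = integral {- pi * r..pi * r} (\<lambda>s. f (s / r)) / real n" by simp
  also have "\<dots> = integral {-pi..pi} f / r"
    using r stretch by (simp add: field_simps flip: r(2))
  finally show ?thesis
    using free_green_integral[of n x] r by (simp add: f_def[abs_def] geom_lam_bar_def r_def)
qed

lemma geom_lam_bar_le_inverse_gap:
  assumes "A1 \<mu>" "\<And>t. t \<in> {-pi..pi} \<Longrightarrow> c * t\<^sup>2 \<le> 1 - lam_bar \<mu> t"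
    and t: "t \<in> {-pi..pi}" "t \<noteq> 0" and "0 < c"
  shows "geom_lam_bar n t \<le> 1 / (c * t\<^sup>2)"
proof -
  have "lam_bar \<mu> t < 1" by (rule lam_bar_lt_1[OF assms(1) t])
  then have "geom_lam_bar n t \<le> 1 / (1 - lam_bar \<mu> t)"
    unfolding geom_lam_bar_def by (intro sum_power_le_inverse lam_bar_nonneg)
  also have "\<dots> \<le> 1 / (c * t\<^sup>2)"
  proof -
    have "0 < c * t\<^sup>2" using \<open>0 < c\<close> t(2) by simp
    moreover have "c * t\<^sup>2 \<le> 1 - lam_bar \<mu> t" using assms(2) t(1) by blast
    ultimately show ?thesis by (intro divide_left_mono) auto
  qed
  finally show ?thesis .
qed

lemma scaled_integrand_bound:
  assumes "A1 \<mu>" "0 < c" "\<And>t. t \<in> {-pi..pi} \<Longrightarrow> c * t\<^sup>2 \<le> 1 - lam_bar \<mu> t"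
  shows "\<bar>scaled_integrand n x s\<bar> \<le> (4 + 2 / c) * inverse (1 + s\<^sup>2)"
proof (cases "1 \<le> n \<and> \<bar>s\<bar> \<le> pi * sqrt (real n)")
  case True
  define E where "E = geom_lam_bar n (s / sqrt (real n)) / real n"
  have "0 \<le> E" by (simp add: E_def geom_lam_bar_nonneg)
  have "\<bar>scaled_integrand n x s\<bar> = E * \<bar>cos (s * of_int x / sqrt (real n))\<bar>"
    using True geom_lam_bar_nonneg by (simp add: scaled_integrand_def E_def abs_mult indicator_def abs_le_iff)
  also have "\<dots> \<le> E" using \<open>0 \<le> E\<close> by (simp add: mult_left_le)
  also have "E \<le> (4 + 2 / c) * inverse (1 + s\<^sup>2)"
  proof (rule le_inverse_one_plus_square[OF \<open>0 < c\<close>])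
    show "E \<le> 2"
      using geom_lam_bar_le[of n "s / sqrt (real n)"] True by (simp add: E_def field_simps)
    assume "s \<noteq> 0"
    have "s / sqrt (real n) \<in> {-pi..pi}" using True by (intro div_sqrt_mem_pi_interval) auto
    then have "geom_lam_bar n (s / sqrt (real n)) \<le> 1 / (c * (s / sqrt (real n))\<^sup>2)"
      using \<open>s \<noteq> 0\<close> True by (intro geom_lam_bar_le_inverse_gap assms) auto
    also have "\<dots> = real n / (c * s\<^sup>2)" using True by (simp add: power_divide)
    finally show "E \<le> 1 / (c * s\<^sup>2)" using True by (simp add: E_def divide_le_eq field_simps)
  qed
  finally show ?thesis .
next
  case False
  then have "scaled_integrand n x s = 0" by (auto simp: scaled_integrand_def indicator_def abs_le_iff)
  then show ?thesis using \<open>0 < c\<close> by (simp add: add_pos_nonneg)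
qed

lemma scaled_geom_lam_bar_tendsto:
  assumes "A1 \<mu>"
  shows "(\<lambda>n. geom_lam_bar n (s / sqrt (real n)) / real n) \<longlonglongrightarrow> green_profile (sigma_a2 \<mu>) s"
proof (cases "s = 0")
  case True
  have "(\<lambda>n. 1 + 1 / real n) \<longlonglongrightarrow> 1 + 0" by (intro tendsto_intros)
  moreover have "eventually (\<lambda>n. 1 + 1 / real n = geom_lam_bar n (s / sqrt (real n)) / real n) sequentially"
    using eventually_gt_at_top[of 0] by eventually_elim (simp add: True geom_lam_bar_def field_simps)
  ultimately show ?thesis using True by (simp add: green_profile_def Lim_transform_eventually)
next
  case False
  define t where "t n = s / sqrt (real n)" for n
  define y where "y n = real n * (1 - lam_bar \<mu> (t n))" for n
  let ?a = "sigma_a2 \<mu> * s\<^sup>2"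
  have "filterlim t (at 0) sequentially"
    using False by (auto intro!: filterlim_atI tendsto_const_div_sqrt simp: t_def[abs_def])
  from tendsto_mult_left[OF filterlim_compose[OF one_minus_lam_bar_over_square_tendsto this], of "s\<^sup>2"]
  have "(\<lambda>n. s\<^sup>2 * ((1 - lam_bar \<mu> (t n)) / (t n)\<^sup>2)) \<longlonglongrightarrow> ?a" by (simp add: mult.commute)
  moreover have "eventually (\<lambda>n. s\<^sup>2 * ((1 - lam_bar \<mu> (t n)) / (t n)\<^sup>2) = y n) sequentially"
    using eventually_gt_at_top[of 0]
    by eventually_elim (use False in \<open>simp add: t_def y_def power_divide field_simps\<close>)
  ultimately have "y \<longlonglongrightarrow> ?a" by (rule Lim_transform_eventually)
  then have "(\<lambda>n. (1 - (1 - y n / real n) ^ n * (1 - y n / real n)) / y n) \<longlonglongrightarrow> (1 - exp (- ?a) * (1 - 0)) / ?a"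
    using False sigma_a2_pos[OF assms]
    by (intro tendsto_intros tendsto_one_minus_div_power tendsto_div_real_0) auto
  moreover have "eventually (\<lambda>n. (1 - (1 - y n / real n) ^ n * (1 - y n / real n)) / y n
      = geom_lam_bar n (s / sqrt (real n)) / real n) sequentially"
    using eventually_abs_le_pi_sqrt[of s]
  proof eventually_elim
    case (elim n)
    then have "t n \<in> {-pi..pi}" "t n \<noteq> 0"
      using False div_sqrt_mem_pi_interval[of n s] by (auto simp: t_def)
    then have "lam_bar \<mu> (t n) < 1" by (rule lam_bar_lt_1[OF assms])
    then have geom: "geom_lam_bar n (t n) = (1 - lam_bar \<mu> (t n) ^ Suc n) / (1 - lam_bar \<mu> (t n))"
      using sum_gp0[of "lam_bar \<mu> (t n)" n] by (simp add: geom_lam_bar_def)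
    have "1 - y n / real n = lam_bar \<mu> (t n)" using elim by (simp add: y_def)
    then have "(1 - (1 - y n / real n) ^ n * (1 - y n / real n)) / y n
        = ((1 - lam_bar \<mu> (t n) ^ Suc n) / (1 - lam_bar \<mu> (t n))) / real n"
      by (simp add: y_def divide_divide_eq_left mult.commute)
    then show ?case using geom by (simp add: t_def divide_divide_eq_left mult.commute)
  qed
  ultimately show ?thesis using False by (simp add: green_profile_def Lim_transform_eventually mult.commute)
qed

lemma scaled_integrand_tendsto:
  assumes "A1 \<mu>" and B: "\<And>n. \<bar>real_of_int (xs n) - sqrt (real n) * x\<bar> \<le> B"
  shows "(\<lambda>n. scaled_integrand n (xs n) s) \<longlonglongrightarrow> green_profile (sigma_a2 \<mu>) s * cos (s * x)"
proof -
  have "(\<lambda>n. of_int (xs n) / sqrt (real n) - x) \<longlonglongrightarrow> 0"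
  proof (rule Lim_null_comparison[OF _ tendsto_const_div_sqrt[of B]])
    show "eventually (\<lambda>n. norm (of_int (xs n) / sqrt (real n) - x) \<le> B / sqrt (real n)) sequentially"
      using eventually_gt_at_top[of 0]
    proof eventually_elim
      case (elim n)
      have "of_int (xs n) / sqrt (real n) - x = (of_int (xs n) - sqrt (real n) * x) / sqrt (real n)"
        using elim by (simp add: field_simps)
      then show ?case using B[of n] by (simp add: abs_div divide_right_mono)
    qed
  qed
  then have "(\<lambda>n. of_int (xs n) / sqrt (real n)) \<longlonglongrightarrow> x" by (simp add: LIM_zero_iff)
  then have "(\<lambda>n. geom_lam_bar n (s / sqrt (real n)) / real n * cos (s * (of_int (xs n) / sqrt (real n))))
      \<longlonglongrightarrow> green_profile (sigma_a2 \<mu>) s * cos (s * x)"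
    by (intro tendsto_mult scaled_geom_lam_bar_tendsto[OF assms(1)] tendsto_cos tendsto_mult_left)
  moreover have "eventually (\<lambda>n. geom_lam_bar n (s / sqrt (real n)) / real n * cos (s * (of_int (xs n) / sqrt (real n)))
      = scaled_integrand n (xs n) s) sequentially"
    using eventually_abs_le_pi_sqrt[of s] by eventually_elim (auto simp: scaled_integrand_def indicator_def abs_le_iff)
  ultimately show ?thesis by (rule Lim_transform_eventually)
qed

lemma free_green_scaling_limit:
  assumes "A1 \<mu>" and B: "\<And>n. \<bar>real_of_int (xs n) - sqrt (real n) * x\<bar> \<le> B"
  shows "(\<lambda>n. free_green n (xs n) / sqrt (real n))
    \<longlonglongrightarrow> 1 / (2 * pi) * (\<integral>s. green_profile (sigma_a2 \<mu>) s * cos (s * x) \<partial>lborel)"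
proof -
  obtain c where c: "c > 0" "\<And>t. t \<in> {-pi..pi} \<Longrightarrow> c * t\<^sup>2 \<le> 1 - lam_bar \<mu> t"
    using lam_bar_quadratic_gap[OF assms(1)] by blast
  have "(\<lambda>n. \<integral>s. scaled_integrand n (xs n) s \<partial>lborel)
      \<longlonglongrightarrow> (\<integral>s. green_profile (sigma_a2 \<mu>) s * cos (s * x) \<partial>lborel)"
  proof (rule integral_dominated_convergence)
    show "integrable lborel (\<lambda>s. (4 + 2 / c) * inverse (1 + s\<^sup>2))"
      by (intro integrable_mult_right integrable_inverse_one_plus_square_lborel)
    show "AE s in lborel. (\<lambda>n. scaled_integrand n (xs n) s) \<longlonglongrightarrow> green_profile (sigma_a2 \<mu>) s * cos (s * x)"
      using scaled_integrand_tendsto[OF assms] by simp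
    show "AE s in lborel. norm (scaled_integrand n (xs n) s) \<le> (4 + 2 / c) * inverse (1 + s\<^sup>2)" for n
      using scaled_integrand_bound[OF assms(1) c] by simp
    show "(\<lambda>s. green_profile (sigma_a2 \<mu>) s * cos (s * x)) \<in> borel_measurable lborel"
      by simp
  qed simp
  then have "(\<lambda>n. 1 / (2 * pi) * (\<integral>s. scaled_integrand n (xs n) s \<partial>lborel))
      \<longlonglongrightarrow> 1 / (2 * pi) * (\<integral>s. green_profile (sigma_a2 \<mu>) s * cos (s * x) \<partial>lborel)"
    by (rule tendsto_mult_left)
  moreover have "eventually (\<lambda>n. 1 / (2 * pi) * (\<integral>s. scaled_integrand n (xs n) s \<partial>lborel)
      = free_green n (xs n) / sqrt (real n)) sequentially"
    using eventually_ge_at_top[of 1] by eventually_elim (simp add: free_green_scaled)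
  ultimately show ?thesis by (rule Lim_transform_eventually)
qed

end

theorem lemma4p1:
  fixes M :: nat and \<mu> :: "(int \<Rightarrow> real) measure" and x :: real and xs :: "nat \<Rightarrow> int"
  assumes "M \<ge> 1"
    and "env_law M \<mu>"
    and "A1 \<mu>"
    and "A2 M \<mu>"
    and "\<exists>B. \<forall>n. \<bar>real_of_int (xs n) - sqrt (real n) * x\<bar> \<le> B"
  shows "(\<lambda>n. Gn \<mu> n (xs n) 0 / sqrt (real n)) \<longlonglongrightarrow>
           1 / (2 * beta \<mu> * sigma_a2 \<mu>) *
           integral {0..2 * sigma_a2 \<mu>} (\<lambda>v. 1 / sqrt (2 * pi * v) * exp (- x\<^sup>2 / (2 * v)))"
proof -
  interpret site_law M \<mu> by unfold_locales (rule assms(2))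
  obtain B where B: "\<And>n. \<bar>real_of_int (xs n) - sqrt (real n) * x\<bar> \<le> B" using assms(5) by blast
  define L where "L = 1 / (2 * pi) * (\<integral>s. green_profile (sigma_a2 \<mu>) s * cos (s * x) \<partial>lborel)"
  have conv: "(\<lambda>n. Gn \<mu> n (xs n) 0 / sqrt (real n)) \<longlonglongrightarrow> L / beta \<mu>"
  proof (rule renewal_tendsto[where g="\<lambda>n j. qpow \<mu> j (xs n) 0" and S=defect_sum])
    show "0 < beta \<mu>" by (rule beta_pos[OF assms(3,4)])
    show "defect_sum \<longlonglongrightarrow> 1 - beta \<mu>" by (rule defect_sum_tendsto[OF assms(3)])
    show "(\<lambda>n. free_green n (xs n) / sqrt (real n)) \<longlonglongrightarrow> L"
      unfolding L_def by (rule free_green_scaling_limit[OF assms(3) B])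
    show "Gn \<mu> n (xs n) 0 = (\<Sum>j\<le>n. qpow \<mu> j (xs n) 0)" for n by (simp add: Gn_def)
  qed (use qpow_nonneg qpow_le_1 Gn_perturbation in auto)
  have "0 < sigma_a2 \<mu>" by (rule sigma_a2_pos[OF assms(3)])
  then have "1 / (2 * beta \<mu> * sigma_a2 \<mu>) *
      integral {0..2 * sigma_a2 \<mu>} (\<lambda>v. 1 / sqrt (2 * pi * v) * exp (- x\<^sup>2 / (2 * v))) = L / beta \<mu>"
    unfolding integral_gaussian_densities_rescale[OF \<open>0 < sigma_a2 \<mu>\<close>] L_def
      gaussian_mixture_integral[OF \<open>0 < sigma_a2 \<mu>\<close>]
    using beta_pos[OF assms(3,4)] by (simp add: field_simps)
  with conv show ?thesis by simp
qed

end
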